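(* Let $d$ be a positive integer and $n \leq d$ a positive integer. Let $G$ be a graph on $d+2$ vertices whose adjacency matrix $A_G$ has eigenvalues $\lambda_1 \geq \lambda_2 \geq \dots \geq \lambda_{d+2}$. If $G$ has a spherical representation in $\mathbb{R}^d$, then $G$ is (spherically) representable in $\mathbb{R}^n$ if and only if the multiplicity of $\lambda_2$ as an eigenvalue of $A_G$ (excluding $\lambda_1$, i.e. counted one less, if $\lambda_1 = \lambda_2$) is at least $d+1-n$.
   Context: Graphs are finite and simple; $A_G$ is the adjacency matrix and its eigenvalues are listed with multiplicity. A finite set $S \subset \mathbb{R}^m$ is a 2-distance set if the set $\{\|p-q\| : p,q \in S, p \neq q\}$ has exactly two elements $\alpha_1 > \alpha_2$; its distance ratio is $k = \alpha_1/\alpha_2$. The associated graph of $S$ has vertex set $S$, with $p,q$ adjacent iff $\|p-q\| = \alpha_1$. A graph $G$ is representable in $\mathbb{R}^m$ if there is a 2-distance set in $\mathbb{R}^m$ whose associated graph is $G$; it has a spherical representation (is spherically representable) in $\mathbb{R}^m$ if such a set can be chosen with all its points on an $(m-1)$-dimensional sphere in $\mathbb{R}^m$. *)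

theory Defs
  imports Complex_Main "Jordan_Normal_Form.Char_Poly"
begin

definition simple_graph :: "nat \<Rightarrow> (nat \<Rightarrow> nat \<Rightarrow> bool) \<Rightarrow> bool" where
  "simple_graph N E \<longleftrightarrow> (\<forall>i<N. \<forall>j<N. E i j \<longrightarrow> E j i) \<and> (\<forall>i<N. \<not> E i i)"

definition adj_matrix :: "nat \<Rightarrow> (nat \<Rightarrow> nat \<Rightarrow> bool) \<Rightarrow> real mat" where
  "adj_matrix N E = mat N N (\<lambda>(i, j). if E i j then 1 else 0)"

(* Points of R^m are functions nat => real vanishing at coordinates >= m. *)
definition in_Rm :: "nat \<Rightarrow> (nat \<Rightarrow> real) \<Rightarrow> bool" where
  "in_Rm m x \<longleftrightarrow> (\<forall>k\<ge>m. x k = 0)"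

definition edist :: "nat \<Rightarrow> (nat \<Rightarrow> real) \<Rightarrow> (nat \<Rightarrow> real) \<Rightarrow> real" where
  "edist m x y = sqrt (\<Sum>k<m. (x k - y k)^2)"

definition two_dist_rep :: "nat \<Rightarrow> nat \<Rightarrow> (nat \<Rightarrow> nat \<Rightarrow> bool) \<Rightarrow> (nat \<Rightarrow> nat \<Rightarrow> real) \<Rightarrow> bool" where
  "two_dist_rep m N E p \<longleftrightarrow>
     inj_on p {..<N} \<and> (\<forall>i<N. in_Rm m (p i)) \<and>
     (\<exists>a1 a2. a1 > a2 \<and>
        {edist m (p i) (p j) | i j. i < N \<and> j < N \<and> i \<noteq> j} = {a1, a2} \<and>
        (\<forall>i<N. \<forall>j<N. i \<noteq> j \<longrightarrow> (E i j \<longleftrightarrow> edist m (p i) (p j) = a1)))"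

definition representable :: "nat \<Rightarrow> nat \<Rightarrow> (nat \<Rightarrow> nat \<Rightarrow> bool) \<Rightarrow> bool" where
  "representable m N E \<longleftrightarrow> (\<exists>p. two_dist_rep m N E p)"

definition spherically_representable :: "nat \<Rightarrow> nat \<Rightarrow> (nat \<Rightarrow> nat \<Rightarrow> bool) \<Rightarrow> bool" where
  "spherically_representable m N E \<longleftrightarrow>
     (\<exists>p c r. two_dist_rep m N E p \<and> in_Rm m c \<and> r > 0 \<and> (\<forall>i<N. edist m (p i) c = r))"

end

theory Submission
  imports Defs "Jordan_Normal_Form.Jordan_Normal_Form_Existence"
    "Jordan_Normal_Form.Jordan_Normal_Form_Uniqueness"
begin

text \<open>Let \<open>p\<^sub>0, \<dots>, p\<^sub>N\<^sub>-\<^sub>1\<close> (\<open>N = d + 2\<close>) be a spherical two-distance representation of \<open>G\<close>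
  with centre \<open>c\<close>. Its Gram matrix \<open>\<langle>p\<^sub>i - c, p\<^sub>j - c\<rangle>\<close> equals \<open>\<kappa> (\<theta> I - A + s J)\<close> for
  constants \<open>\<kappa> > 0\<close>, \<open>\<theta>\<close>, \<open>s\<close> determined by the two distances and the radius. So this
  form is positive semidefinite, and on vectors with zero sum its kernel consists of the
  \<open>\<theta>\<close>-eigenvectors of \<open>A\<close>, which are exactly the affine dependencies of the points. As
  \<open>N\<close> points of \<open>\<real>\<^sup>d\<close> are affinely dependent, \<open>\<theta>\<close> is an eigenvalue; comparing Rayleigh
  quotients and a Perron-Frobenius argument show \<open>\<theta> = \<lambda>\<^sub>2\<close> and that the zero-sum
  \<open>\<theta>\<close>-eigenvectors form a space of dimension \<open>mult(\<lambda>\<^sub>2)\<close>, not counting \<open>\<lambda>\<^sub>1\<close>. Hence the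
  affine hull of the points has dimension \<open>N - 1 - mult(\<lambda>\<^sub>2)\<close>, and projecting the centre onto
  it gives a spherical representation in \<open>\<real>\<^sup>n\<close> as soon as \<open>mult(\<lambda>\<^sub>2) \<ge> d + 1 - n\<close>.

  Conversely, a two-distance representation \<open>q\<close> in \<open>\<real>\<^sup>n\<close> satisfies
  \<open>|\<Sum> x\<^sub>i q\<^sub>i|\<^sup>2 = \<kappa>' (\<theta>' |x|\<^sup>2 - x \<bullet> A x)\<close> whenever \<open>\<Sum> x\<^sub>i = 0\<close>. Comparing maxima of the
  Rayleigh quotient gives \<open>\<theta>' = \<theta>\<close>, so the at least \<open>N - 1 - n\<close> independent affine
  dependencies of \<open>q\<close> are zero-sum \<open>\<lambda>\<^sub>2\<close>-eigenvectors.\<close>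

definition dot :: "nat \<Rightarrow> (nat \<Rightarrow> real) \<Rightarrow> (nat \<Rightarrow> real) \<Rightarrow> real" where
  "dot m x y = (\<Sum>k<m. x k * y k)"

definition matvec :: "nat \<Rightarrow> (nat \<Rightarrow> nat \<Rightarrow> real) \<Rightarrow> (nat \<Rightarrow> real) \<Rightarrow> nat \<Rightarrow> real" where
  "matvec m a x i = (\<Sum>j<m. a i j * x j)"

lemma dot_commute: "dot m x y = dot m y x"
  unfolding dot_def by (simp add: mult.commute)

lemma dot_cong:
  "(\<And>k. k < m \<Longrightarrow> x k = x' k) \<Longrightarrow> (\<And>k. k < m \<Longrightarrow> y k = y' k) \<Longrightarrow> dot m x y = dot m x' y'"
  unfolding dot_def by (auto intro!: sum.cong)

lemma dot_self_nonneg: "0 \<le> dot m x x"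
  unfolding dot_def by (simp add: sum_nonneg)

lemma dot_self_eq_0_iff: "dot m x x = 0 \<longleftrightarrow> (\<forall>k<m. x k = 0)"
  unfolding dot_def by (subst sum_nonneg_eq_0_iff) auto

lemma dot_self_pos: "k < m \<Longrightarrow> x k \<noteq> 0 \<Longrightarrow> 0 < dot m x x"
  using dot_self_nonneg[of m x] dot_self_eq_0_iff[of m x] by fastforce

lemma dot_lincomb_left: "dot m (\<lambda>k. \<Sum>s\<in>S. c s * e s k) y = (\<Sum>s\<in>S. c s * dot m (e s) y)"
  unfolding dot_def by (simp add: sum_distrib_right sum_distrib_left mult_ac) (rule sum.swap)

lemma dot_add_self:
  "dot m (\<lambda>k. x k + y k) (\<lambda>k. x k + y k) = dot m x x + 2 * dot m x y + dot m y y"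
  unfolding dot_def by (simp add: algebra_simps sum.distrib sum_distrib_left)

lemma dot_sum_left: "dot m (\<lambda>k. \<Sum>s\<in>S. e s k) y = (\<Sum>s\<in>S. dot m (e s) y)"
  unfolding dot_def by (simp add: sum_distrib_right) (rule sum.swap)

lemma dot_scale_left: "dot m (\<lambda>k. c * x k) y = c * dot m x y"
  unfolding dot_def by (simp add: sum_distrib_left mult.assoc)

lemma dot_scale_right: "dot m x (\<lambda>k. c * y k) = c * dot m x y"
  unfolding dot_def by (simp add: sum_distrib_left mult_ac)

lemma dot_matvec_commute:
  assumes "\<And>i j. i < m \<Longrightarrow> j < m \<Longrightarrow> a i j = a j i"
  shows "dot m (matvec m a x) y = dot m x (matvec m a y)"
proof -
  have "dot m (matvec m a x) y = (\<Sum>i<m. \<Sum>j<m. a i j * x j * y i)"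
    unfolding dot_def matvec_def by (simp add: sum_distrib_right)
  also have "\<dots> = (\<Sum>j<m. \<Sum>i<m. x j * (a j i * y i))"
    by (subst sum.swap) (auto simp: assms intro!: sum.cong)
  also have "\<dots> = dot m x (matvec m a y)"
    unfolding dot_def matvec_def by (simp add: sum_distrib_left)
  finally show ?thesis .
qed

lemma dot_eigenvectors_eq_0:
  assumes sym: "\<And>i j. i < m \<Longrightarrow> j < m \<Longrightarrow> a i j = a j i"
    and u: "\<And>i. i < m \<Longrightarrow> matvec m a u i = \<mu> * u i"
    and v: "\<And>i. i < m \<Longrightarrow> matvec m a v i = \<nu> * v i"
    and "\<mu> \<noteq> \<nu>"
  shows "dot m u v = 0"
proof -
  have "\<mu> * dot m u v = dot m (matvec m a u) v"
    using dot_cong[of m "matvec m a u" "\<lambda>i. \<mu> * u i" v v] u by (simp add: dot_scale_left)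
  also have "\<dots> = dot m u (matvec m a v)" by (rule dot_matvec_commute[OF sym])
  also have "\<dots> = \<nu> * dot m u v"
    using dot_cong[of m u u "matvec m a v" "\<lambda>i. \<nu> * v i"] v
    by (simp add: dot_commute[of m u] dot_scale_left)
  finally show ?thesis using \<open>\<mu> \<noteq> \<nu>\<close> by simp
qed

lemma psd_form_zero_imp_matvec_zero:
  assumes sym: "\<And>i j. i < m \<Longrightarrow> j < m \<Longrightarrow> b i j = b j i"
    and psd: "\<And>y. 0 \<le> dot m y (matvec m b y)"
    and zero: "dot m x (matvec m b x) = 0" and "i < m"
  shows "matvec m b x i = 0"
proof -
  define w where "w = matvec m b x"
  define c where "c = dot m w (matvec m b w)"
  have expand: "dot m (\<lambda>k. x k - t * w k) (matvec m b (\<lambda>k. x k - t * w k))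
      = - 2 * t * dot m w w + t\<^sup>2 * c" for t
  proof -
    have "matvec m b (\<lambda>k. x k - t * w k) = (\<lambda>i. w i - t * matvec m b w i)"
      unfolding w_def matvec_def by (simp add: algebra_simps sum_subtractf sum_distrib_left)
    then have "dot m (\<lambda>k. x k - t * w k) (matvec m b (\<lambda>k. x k - t * w k))
        = (\<Sum>k<m. x k * w k - t * (x k * matvec m b w k) - t * (w k * w k)
            + t\<^sup>2 * (w k * matvec m b w k))"
      unfolding dot_def by (intro sum.cong) (simp_all add: algebra_simps power2_eq_square)
    also have "\<dots> = dot m x w - t * dot m x (matvec m b w) - t * dot m w w + t\<^sup>2 * c"
      unfolding c_def dot_def by (simp add: sum.distrib sum_subtractf sum_distrib_left)
    also have "dot m x (matvec m b w) = dot m w w"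
      using dot_matvec_commute[of m b x w, OF sym] unfolding w_def by simp
    finally show ?thesis
      using zero unfolding w_def[symmetric] by simp
  qed
  have "dot m w w = 0"
  proof (rule ccontr)
    assume "dot m w w \<noteq> 0"
    then have ww: "0 < dot m w w" using dot_self_nonneg[of m w] by simp
    have c: "0 \<le> c" unfolding c_def by (rule psd)
    define t where "t = dot m w w / (c + 1)"
    have t: "0 < t" unfolding t_def using ww c by simp
    have "t * c < 2 * dot m w w"
      unfolding t_def using ww c by (simp add: field_simps) (smt (verit) mult_nonneg_nonneg)
    then have "- 2 * t * dot m w w + t\<^sup>2 * c < 0"
      using t by (simp add: power2_eq_square algebra_simps)
    with psd[of "\<lambda>k. x k - t * w k"] expand[of t] show False by simp
  qed
  then show ?thesis using \<open>i < m\<close> unfolding dot_self_eq_0_iff w_def by simp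
qed

lemma exists_nonzero_solution:
  fixes L :: "'r \<Rightarrow> 'a \<Rightarrow> real"
  assumes "finite R" "finite J" "card R < card J"
  shows "\<exists>x. (\<exists>j\<in>J. x j \<noteq> 0) \<and> (\<forall>r\<in>R. (\<Sum>j\<in>J. L r j * x j) = 0)"
  using assms
proof (induction R arbitrary: J L rule: finite_induct)
  case empty
  then obtain j where "j \<in> J" by fastforce
  then show ?case by (intro exI[of _ "\<lambda>_. 1"]) auto
next
  case (insert r R)
  show ?case
  proof (cases "\<forall>j\<in>J. L r j = 0")
    case True
    then show ?thesis using insert.IH[of J L] insert.prems insert.hyps by auto
  next
    case False
    then obtain j0 where j0: "j0 \<in> J" "L r j0 \<noteq> 0" by blast
    define J' where "J' = J - {j0}"
    have J: "J = insert j0 J'" and j0J': "j0 \<notin> J'" and fJ': "finite J'"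
      using j0 insert.prems unfolding J'_def by auto
    \<comment> \<open>Gaussian elimination of the variable \<open>j0\<close> by means of the equation \<open>r\<close>\<close>
    define L' where "L' r' j = L r' j - L r' j0 * L r j / L r j0" for r' j
    have "card R < card J'"
      using insert.prems insert.hyps j0 unfolding J'_def by (simp add: card_Diff_singleton)
    with insert.IH[OF fJ'] obtain x' where
      x': "\<exists>j\<in>J'. x' j \<noteq> 0" "\<forall>r'\<in>R. (\<Sum>j\<in>J'. L' r' j * x' j) = 0" by blast
    define x where "x = x'(j0 := - (\<Sum>j\<in>J'. L r j * x' j) / L r j0)"
    have sum_x: "(\<Sum>j\<in>J. L r' j * x j) = L r' j0 * x j0 + (\<Sum>j\<in>J'. L r' j * x' j)" for r'
    proof -
      have "(\<Sum>j\<in>J'. L r' j * x j) = (\<Sum>j\<in>J'. L r' j * x' j)"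
        by (rule sum.cong) (use j0J' in \<open>auto simp: x_def\<close>)
      then show ?thesis unfolding J using fJ' j0J' by simp
    qed
    have "(\<Sum>j\<in>J. L r' j * x j) = 0" if "r' \<in> insert r R" for r'
    proof (cases "r' = r")
      case True
      then show ?thesis unfolding sum_x using j0(2) by (simp add: x_def)
    next
      case False
      have "(\<Sum>j\<in>J'. L' r' j * x' j)
          = (\<Sum>j\<in>J'. L r' j * x' j) - L r' j0 / L r j0 * (\<Sum>j\<in>J'. L r j * x' j)"
        unfolding L'_def by (simp add: sum_distrib_left sum_subtractf left_diff_distrib mult.assoc)
      then show ?thesis using x'(2) that False unfolding sum_x by (simp add: x_def field_simps)
    qed
    moreover have "\<exists>j\<in>J. x j \<noteq> 0"
      using x'(1) j0J' unfolding J x_def by (metis fun_upd_other insertCI)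
    ultimately show ?thesis by blast
  qed
qed

text \<open>The quadratic form of \<open>\<theta> I - A + s J\<close> (\<open>J\<close> the all-ones matrix); for a spherical
  two-distance representation it is, up to a positive factor, \<open>x \<mapsto> |\<Sum> x\<^sub>i (p\<^sub>i - c)|\<^sup>2\<close>.\<close>

definition gram_form :: "nat \<Rightarrow> (nat \<Rightarrow> nat \<Rightarrow> real) \<Rightarrow> real \<Rightarrow> real \<Rightarrow> (nat \<Rightarrow> real) \<Rightarrow> real" where
  "gram_form m a \<theta> s x = \<theta> * dot m x x - dot m x (matvec m a x) + s * (\<Sum>i<m. x i)\<^sup>2"

lemma matvec_shift:
  assumes "i < m"
  shows "matvec m (\<lambda>i j. (if i = j then \<theta> else 0) - a i j + s) x i
    = \<theta> * x i - matvec m a x i + s * (\<Sum>j<m. x j)"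
proof -
  have "matvec m (\<lambda>i j. (if i = j then \<theta> else 0) - a i j + s) x i
      = (\<Sum>j<m. (if i = j then \<theta> * x j else 0) - a i j * x j + s * x j)"
    unfolding matvec_def by (intro sum.cong) (auto simp: algebra_simps)
  also have "\<dots> = (\<Sum>j<m. if i = j then \<theta> * x j else 0) - matvec m a x i + s * (\<Sum>j<m. x j)"
    unfolding matvec_def by (simp add: sum.distrib sum_subtractf sum_distrib_left)
  finally show ?thesis using assms by simp
qed

lemma gram_form_eq_dot_matvec:
  "gram_form m a \<theta> s x = dot m x (matvec m (\<lambda>i j. (if i = j then \<theta> else 0) - a i j + s) x)"
proof -
  have "dot m x (matvec m (\<lambda>i j. (if i = j then \<theta> else 0) - a i j + s) x)
      = dot m x (\<lambda>i. \<theta> * x i - matvec m a x i + s * (\<Sum>j<m. x j))"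
    by (rule dot_cong) (simp_all add: matvec_shift)
  also have "\<dots> = gram_form m a \<theta> s x"
    unfolding gram_form_def dot_def
    by (simp add: algebra_simps sum.distrib sum_subtractf sum_distrib_left sum_distrib_right
        power2_eq_square)
  finally show ?thesis by simp
qed

lemma gram_form_zero_imp_matvec:
  assumes sym: "\<And>i j. i < m \<Longrightarrow> j < m \<Longrightarrow> a i j = a j i"
    and psd: "\<And>y. 0 \<le> gram_form m a \<theta> s y"
    and "gram_form m a \<theta> s x = 0" and "i < m"
  shows "matvec m a x i = \<theta> * x i + s * (\<Sum>j<m. x j)"
proof -
  have "matvec m (\<lambda>i j. (if i = j then \<theta> else 0) - a i j + s) x i = 0"
    using assms sym by (intro psd_form_zero_imp_matvec_zero) (auto simp: gram_form_eq_dot_matvec[symmetric])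
  then show ?thesis using assms by (simp add: matvec_shift)
qed

lemma jordan_matrix_diagonal:
  assumes "\<forall>x\<in>set n_as. fst x = 1"
  shows "jordan_matrix n_as
    = mat (length n_as) (length n_as) (\<lambda>(i, j). if i = j then snd (n_as ! i) else (0::'a::{zero,one}))"
  using assms
proof (induction n_as)
  case Nil
  show ?case unfolding jordan_matrix_def by (intro eq_matI) auto
next
  case (Cons x xs)
  then obtain a where x: "x = (1, a)" by (cases x) auto
  from Cons have IH: "jordan_matrix xs
      = mat (length xs) (length xs) (\<lambda>(i, j). if i = j then snd (xs ! i) else 0)"
    by auto
  have "jordan_matrix (x # xs)
      = four_block_mat (jordan_block 1 a) (0\<^sub>m 1 (length xs)) (0\<^sub>m (length xs) 1) (jordan_matrix xs)"
    unfolding x jordan_matrix_def[of "(1, a) # xs"] using IH by (simp add: Let_def jordan_matrix_def)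
  then show ?case unfolding IH by (intro eq_matI) (auto simp: x nth_Cons')
qed

lemma mat_kernel_symmetric_square:
  fixes B :: "real mat"
  assumes B: "B \<in> carrier_mat n n" and sym: "B\<^sup>T = B"
  shows "mat_kernel (B * B) = mat_kernel B"
proof -
  have "B *\<^sub>v v = 0\<^sub>v n" if v: "v \<in> carrier_vec n" and BBv: "B *\<^sub>v (B *\<^sub>v v) = 0\<^sub>v n" for v
  proof -
    have w: "B *\<^sub>v v \<in> carrier_vec n" using B v by simp
    have "(B *\<^sub>v v) \<bullet>c (B *\<^sub>v v) = (B\<^sup>T *\<^sub>v v) \<bullet> (B *\<^sub>v v)" using sym by simp
    also have "\<dots> = v \<bullet> (B *\<^sub>v (B *\<^sub>v v))" by (rule transpose_vec_mult_scalar[OF B w v])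
    finally have "(B *\<^sub>v v) \<bullet>c (B *\<^sub>v v) = 0" using BBv v by simp
    then show ?thesis using conjugate_square_eq_0_vec[OF w] by simp
  qed
  moreover have "(B * B) *\<^sub>v v = B *\<^sub>v (B *\<^sub>v v)" if "v \<in> carrier_vec n" for v
    using B that by simp
  ultimately show ?thesis
    using B unfolding mat_kernel_def by auto
qed

text \<open>A Jordan block of size \<open>\<ge> 2\<close> for the eigenvalue \<open>a\<close> would make the kernel of
  \<open>(A - a I)\<^sup>2\<close> larger than that of \<open>A - a I\<close>.\<close>

lemma jordan_nf_real_symmetric_block_size:
  fixes A :: "real mat"
  assumes A: "A \<in> carrier_mat n n" and sym: "A\<^sup>T = A" and jnf: "jordan_nf A n_as"
    and x: "x \<in> set n_as"
  shows "fst x = 1"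
proof (rule ccontr)
  obtain k a where xka: "x = (k, a)" by force
  assume "fst x \<noteq> 1"
  moreover have "k \<noteq> 0" using jnf x xka unfolding jordan_nf_def by force
  ultimately have k2: "2 \<le> k" using xka by auto
  define B where "B = char_matrix A a"
  have B: "B \<in> carrier_mat n n" unfolding B_def using A by simp
  have "B\<^sup>T = B"
  proof (rule eq_matI)
    fix i j assume "i < dim_row B" "j < dim_col B"
    then have ij: "i < n" "j < n" using B by auto
    have "A $$ (j, i) = A $$ (i, j)"
      using arg_cong[OF sym, of "\<lambda>M. M $$ (i, j)"] ij A by auto
    then show "B\<^sup>T $$ (i, j) = B $$ (i, j)"
      using ij A unfolding B_def char_matrix_def by auto
  qed (use B in auto)
  then have "dim_gen_eigenspace A a 2 = dim_gen_eigenspace A a 1"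
    using mat_kernel_symmetric_square[OF B] B
    unfolding dim_gen_eigenspace_def kernel_dim_def B_def by (simp add: numeral_2_eq_2)
  moreover define ks where "ks = map fst (filter (\<lambda>(n, e). e = a) n_as)"
  have "k \<in> set ks" unfolding ks_def using x xka by force
  then obtain ys zs where ks: "ks = ys @ k # zs" by (meson split_list)
  have mono: "sum_list (map (min 1) xs) \<le> sum_list (map (min 2) xs)" for xs :: "nat list"
    by (rule sum_list_mono) simp
  have "sum_list (map (min 1) ks) < sum_list (map (min 2) ks)"
    unfolding ks using k2 add_mono[OF mono[of ys] mono[of zs]] by simp
  ultimately show False unfolding dim_gen_eigenspace[OF jnf] ks_def by simp
qed

lemma real_symmetric_mat_diagonalizable:
  fixes A :: "real mat"
  assumes A: "A \<in> carrier_mat n n" and sym: "A\<^sup>T = A"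
    and cp: "char_poly A = (\<Prod>a\<leftarrow>es. [:- a, 1:])"
  obtains P Q ev where "similar_mat_wit A (mat_diag n ev) P Q"
    and "\<And>\<mu>. Polynomial.order \<mu> (char_poly A) = card {i. i < n \<and> ev i = \<mu>}"
proof -
  obtain n_as where jnf: "jordan_nf A n_as" using jordan_nf_exists[OF A cp] by blast
  note blocks = jordan_nf_real_symmetric_block_size[OF A sym jnf]
  have J: "jordan_matrix n_as
      = mat (length n_as) (length n_as) (\<lambda>(i, j). if i = j then snd (n_as ! i) else 0)"
    by (rule jordan_matrix_diagonal) (use blocks in blast)
  define ev where "ev i = snd (n_as ! i)" for i
  from jnf obtain P Q where PQ: "similar_mat_wit A (jordan_matrix n_as) P Q"
    unfolding jordan_nf_def similar_mat_def by blast
  have len: "length n_as = n"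
    using similar_mat_witD2[OF A PQ] unfolding J by auto
  show ?thesis
  proof
    have "jordan_matrix n_as = mat_diag n ev"
      unfolding J len ev_def mat_diag_def by (intro eq_matI) auto
    then show "similar_mat_wit A (mat_diag n ev) P Q" using PQ by simp
    have "sum_list (map fst (filter (\<lambda>na. snd na = \<mu>) xs)) = length (filter (\<lambda>na. snd na = \<mu>) xs)"
      if "set xs \<subseteq> set n_as" for xs \<mu>
      using that blocks by (induction xs) auto
    then show "Polynomial.order \<mu> (char_poly A) = card {i. i < n \<and> ev i = \<mu>}" for \<mu>
      unfolding jordan_nf_order[OF jnf] length_filter_conv_card ev_def by (simp add: len)
  qed
qed

text \<open>\<open>V k\<close> is the \<open>k\<close>-th column of a diagonalising matrix \<open>P\<close> and \<open>W k\<close> the \<open>k\<close>-th row of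
  \<open>P\<^sup>-\<^sup>1\<close>; the eigenvectors are not assumed to be orthogonal.\<close>

locale eigenbasis =
  fixes N :: nat and a :: "nat \<Rightarrow> nat \<Rightarrow> real" and V W :: "nat \<Rightarrow> nat \<Rightarrow> real"
    and ev :: "nat \<Rightarrow> real"
  assumes symmetric: "\<And>i j. i < N \<Longrightarrow> j < N \<Longrightarrow> a i j = a j i"
    and eigenvector: "\<And>k i. k < N \<Longrightarrow> i < N \<Longrightarrow> matvec N a (V k) i = ev k * V k i"
    and left_eigenvector: "\<And>k i. k < N \<Longrightarrow> i < N \<Longrightarrow> (\<Sum>j<N. W k j * a j i) = ev k * W k i"
    and V_W: "\<And>i j. i < N \<Longrightarrow> j < N \<Longrightarrow> (\<Sum>k<N. V k i * W k j) = (if i = j then 1 else 0)"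
    and W_V: "\<And>k l. k < N \<Longrightarrow> l < N \<Longrightarrow> (\<Sum>j<N. W k j * V l j) = (if k = l then 1 else 0)"
begin

definition coord :: "(nat \<Rightarrow> real) \<Rightarrow> nat \<Rightarrow> real" where
  "coord x k = (\<Sum>j<N. W k j * x j)"

lemma eigen_expansion: "i < N \<Longrightarrow> x i = (\<Sum>k<N. coord x k * V k i)"
proof -
  assume i: "i < N"
  have "(\<Sum>k<N. coord x k * V k i) = (\<Sum>j<N. x j * (\<Sum>k<N. V k i * W k j))"
    unfolding coord_def by (simp add: sum_distrib_left sum_distrib_right mult_ac) (rule sum.swap)
  also have "\<dots> = x i" using i by (simp add: V_W if_distrib cong: if_cong)
  finally show ?thesis by simp
qed

lemma coord_cong: "(\<And>i. i < N \<Longrightarrow> x i = y i) \<Longrightarrow> coord x = coord y"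
  unfolding coord_def by (auto intro!: sum.cong)

lemma coord_sum: "coord (\<lambda>i. \<Sum>t\<in>T. f t i) k = (\<Sum>t\<in>T. coord (f t) k)"
  unfolding coord_def by (simp add: sum_distrib_left) (rule sum.swap)

lemma coord_scale: "coord (\<lambda>i. c * x i) k = c * coord x k"
  unfolding coord_def by (simp add: sum_distrib_left mult_ac)

lemma coord_V: "k < N \<Longrightarrow> l < N \<Longrightarrow> coord (V l) k = (if k = l then 1 else 0)"
  unfolding coord_def by (simp add: W_V)

lemma coord_lincomb:
  assumes "S \<subseteq> {..<N}" "k < N"
  shows "coord (\<lambda>i. \<Sum>s\<in>S. c s * V s i) k = (if k \<in> S then c k else 0)"
proof -
  have "finite S" using assms(1) finite_subset by blast
  moreover have "coord (\<lambda>i. \<Sum>s\<in>S. c s * V s i) k = (\<Sum>s\<in>S. if k = s then c s else 0)"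
    unfolding coord_sum coord_scale using assms by (intro sum.cong) (auto simp: coord_V)
  ultimately show ?thesis by simp
qed

lemma matvec_lincomb:
  assumes "S \<subseteq> {..<N}" "i < N"
  shows "matvec N a (\<lambda>j. \<Sum>s\<in>S. c s * V s j) i = (\<Sum>s\<in>S. c s * ev s * V s i)"
proof -
  have "matvec N a (\<lambda>j. \<Sum>s\<in>S. c s * V s j) i = (\<Sum>s\<in>S. c s * matvec N a (V s) i)"
    unfolding matvec_def by (simp add: sum_distrib_left mult_ac) (rule sum.swap)
  also have "\<dots> = (\<Sum>s\<in>S. c s * ev s * V s i)"
    using assms by (intro sum.cong) (auto simp: eigenvector)
  finally show ?thesis .
qed

lemma coeffs_eq_0_if_coord_delta:
  assumes "finite T" and "\<And>t k. t \<in> T \<Longrightarrow> k \<in> T \<Longrightarrow> coord (X t) k = (if k = t then 1 else 0)"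
    and "\<And>i. i < N \<Longrightarrow> (\<Sum>t\<in>T. \<beta> t * X t i) = 0" and "k \<in> T"
  shows "\<beta> k = 0"
proof -
  have "coord (\<lambda>i. \<Sum>t\<in>T. \<beta> t * X t i) k = (\<Sum>t\<in>T. \<beta> t * coord (X t) k)"
    by (simp add: coord_sum coord_scale)
  also have "\<dots> = (\<Sum>t\<in>T. if t = k then \<beta> t else 0)"
    using assms(2,4) by (intro sum.cong) auto
  also have "\<dots> = \<beta> k" using assms(1,4) by simp
  finally show ?thesis using coord_cong[of "\<lambda>i. \<Sum>t\<in>T. \<beta> t * X t i" "\<lambda>_. 0"] assms(3)
    by (simp add: coord_def)
qed

lemma coord_matvec: "k < N \<Longrightarrow> coord (matvec N a x) k = ev k * coord x k"
proof -
  assume k: "k < N"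
  have "coord (matvec N a x) k = (\<Sum>i<N. x i * (\<Sum>j<N. W k j * a j i))"
    unfolding coord_def matvec_def
    by (simp add: sum_distrib_left sum_distrib_right mult_ac) (rule sum.swap)
  also have "\<dots> = ev k * coord x k"
    using k unfolding coord_def by (simp add: left_eigenvector sum_distrib_left mult_ac)
  finally show ?thesis .
qed

lemma coord_eigenvector:
  assumes "\<And>i. i < N \<Longrightarrow> matvec N a x i = \<theta> * x i" and "k < N" and "ev k \<noteq> \<theta>"
  shows "coord x k = 0"
proof -
  have "coord (matvec N a x) k = coord (\<lambda>i. \<theta> * x i) k"
    using assms(1) by (metis coord_cong)
  then have "ev k * coord x k = \<theta> * coord x k" by (simp add: coord_matvec[OF assms(2)] coord_scale)
  then show ?thesis using assms(3) by simp
qed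

lemma eq_0_if_coord_eq_0: "(\<And>k. k < N \<Longrightarrow> coord x k = 0) \<Longrightarrow> i < N \<Longrightarrow> x i = 0"
  using eigen_expansion[of i x] by simp

lemma exists_nonzero_if_coord_nonzero: "coord x k \<noteq> 0 \<Longrightarrow> \<exists>i<N. x i \<noteq> 0"
  unfolding coord_def by (metis (no_types, lifting) mult_zero_right sum.neutral lessThan_iff)

lemma sum_eigen_expansion: "(\<Sum>i<N. x i) = (\<Sum>k<N. coord x k * (\<Sum>i<N. V k i))"
  by (simp add: eigen_expansion[of _ x] sum_distrib_left) (rule sum.swap)

definition component :: "real \<Rightarrow> (nat \<Rightarrow> real) \<Rightarrow> nat \<Rightarrow> real" where
  "component \<mu> x i = (\<Sum>k | k < N \<and> ev k = \<mu>. coord x k * V k i)"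

lemma sum_components: "i < N \<Longrightarrow> (\<Sum>\<mu>\<in>ev ` {..<N}. component \<mu> x i) = x i"
  unfolding component_def eigen_expansion[of i x]
  by (rule sum.group[of "{..<N}" "ev ` {..<N}" ev, simplified Int_def lessThan_iff]) auto

lemma component_eigenvector:
  assumes "i < N"
  shows "matvec N a (component \<mu> x) i = \<mu> * component \<mu> x i"
proof -
  have "matvec N a (component \<mu> x) i = (\<Sum>k | k < N \<and> ev k = \<mu>. coord x k * matvec N a (V k) i)"
    unfolding component_def matvec_def by (simp add: sum_distrib_left mult_ac) (rule sum.swap)
  also have "\<dots> = (\<Sum>k | k < N \<and> ev k = \<mu>. \<mu> * (coord x k * V k i))"
    using assms by (intro sum.cong) (auto simp: eigenvector)
  finally show ?thesis unfolding component_def by (simp add: sum_distrib_left)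
qed

lemma coord_component:
  "k < N \<Longrightarrow> coord (component \<mu> x) k = (if ev k = \<mu> then coord x k else 0)"
  unfolding component_def by (subst coord_lincomb) auto

lemma dot_components_eq_0: "\<mu> \<noteq> \<nu> \<Longrightarrow> dot N (component \<mu> x) (component \<nu> x) = 0"
  by (rule dot_eigenvectors_eq_0[OF symmetric component_eigenvector component_eigenvector])

lemma dot_sum_components: "dot N x y = (\<Sum>\<mu>\<in>ev ` {..<N}. dot N (component \<mu> x) y)"
  using dot_cong[of N x "\<lambda>i. \<Sum>\<mu>\<in>ev ` {..<N}. component \<mu> x i" y y] sum_components
  by (simp add: dot_sum_left)

lemma dot_component_self: "\<mu> \<in> ev ` {..<N} \<Longrightarrow> dot N (component \<mu> x) x = dot N (component \<mu> x) (component \<mu> x)"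
proof -
  assume \<mu>: "\<mu> \<in> ev ` {..<N}"
  have "dot N (component \<mu> x) x = (\<Sum>\<nu>\<in>ev ` {..<N}. dot N (component \<nu> x) (component \<mu> x))"
    by (subst dot_commute) (rule dot_sum_components)
  also have "\<dots> = (\<Sum>\<nu>\<in>ev ` {..<N}. if \<nu> = \<mu> then dot N (component \<mu> x) (component \<mu> x) else 0)"
    by (intro sum.cong) (auto simp: dot_components_eq_0)
  finally show ?thesis using \<mu> by simp
qed

lemma rayleigh_components:
  "t * dot N x x - dot N x (matvec N a x)
    = (\<Sum>\<mu>\<in>ev ` {..<N}. (t - \<mu>) * dot N (component \<mu> x) (component \<mu> x))"
proof -
  have "dot N (component \<mu> x) (matvec N a x) = \<mu> * dot N (component \<mu> x) x" for \<mu>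
    using dot_matvec_commute[OF symmetric, where x = "component \<mu> x" and y = x, symmetric]
      dot_cong[of N "matvec N a (component \<mu> x)" "\<lambda>i. \<mu> * component \<mu> x i" x x]
    by (simp add: component_eigenvector dot_scale_left)
  then have "t * dot N x x - dot N x (matvec N a x)
      = (\<Sum>\<mu>\<in>ev ` {..<N}. (t - \<mu>) * dot N (component \<mu> x) x)"
    by (simp add: dot_sum_components[of x] sum_distrib_left sum_subtractf left_diff_distrib)
  also have "\<dots> = (\<Sum>\<mu>\<in>ev ` {..<N}. (t - \<mu>) * dot N (component \<mu> x) (component \<mu> x))"
    by (intro sum.cong) (simp_all add: dot_component_self)
  finally show ?thesis .
qed

lemma rayleigh_le:
  assumes "\<And>k. k < N \<Longrightarrow> ev k \<le> t"
  shows "dot N x (matvec N a x) \<le> t * dot N x x"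
proof -
  have "0 \<le> (\<Sum>\<mu>\<in>ev ` {..<N}. (t - \<mu>) * dot N (component \<mu> x) (component \<mu> x))"
    using assms by (intro sum_nonneg mult_nonneg_nonneg dot_self_nonneg) auto
  then show ?thesis unfolding rayleigh_components[symmetric] by simp
qed

lemma rayleigh_less:
  assumes "\<And>k. k < N \<Longrightarrow> coord x k \<noteq> 0 \<Longrightarrow> \<theta> \<le> ev k"
    and "k0 < N" "coord x k0 \<noteq> 0" "\<theta> < ev k0"
  shows "\<theta> * dot N x x < dot N x (matvec N a x)"
proof -
  let ?f = "\<lambda>\<mu>. (\<theta> - \<mu>) * dot N (component \<mu> x) (component \<mu> x)"
  have le: "?f \<mu> \<le> 0" if "\<mu> \<in> ev ` {..<N}" for \<mu>
  proof (cases "\<mu> < \<theta>")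
    case True
    then have "component \<mu> x i = 0" for i
      unfolding component_def using assms(1) by (intro sum.neutral) force
    then show ?thesis by (simp add: dot_def)
  next
    case False
    then show ?thesis by (simp add: mult_nonpos_nonneg dot_self_nonneg)
  qed
  have "coord (component (ev k0) x) k0 \<noteq> 0" using assms(2,3) by (simp add: coord_component)
  then obtain i where "i < N" "component (ev k0) x i \<noteq> 0"
    using exists_nonzero_if_coord_nonzero by blast
  then have "?f (ev k0) < 0"
    using assms(4) dot_self_pos by (simp add: mult_neg_pos)
  moreover have "(\<Sum>\<mu>\<in>ev ` {..<N}. ?f \<mu>) = ?f (ev k0) + (\<Sum>\<mu>\<in>ev ` {..<N} - {ev k0}. ?f \<mu>)"
    using assms(2) by (intro sum.remove) auto
  moreover have "(\<Sum>\<mu>\<in>ev ` {..<N} - {ev k0}. ?f \<mu>) \<le> 0" using le by (intro sum_nonpos) auto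
  ultimately show ?thesis using rayleigh_components[of \<theta> x] by linarith
qed

end

lemma order_prod_linear_factors:
  fixes N :: nat
  shows "Polynomial.order \<mu> (\<Prod>i<N. [:- lam i, 1:]) = card {i. i < N \<and> lam i = (\<mu>::real)}"
proof (induction N)
  case (Suc N)
  have "(\<Prod>i<N. [:- lam i, 1:]) \<noteq> 0" by (subst prod_zero_iff) auto
  moreover have "[:- lam N, 1:] \<noteq> 0" by simp
  ultimately have nz: "(\<Prod>i<N. [:- lam i, 1:]) * [:- lam N, 1:] \<noteq> 0" using mult_eq_0_iff by blast
  have "Polynomial.order \<mu> (\<Prod>i<Suc N. [:- lam i, 1:])
      = Polynomial.order \<mu> ((\<Prod>i<N. [:- lam i, 1:]) * [:- lam N, 1:])"
    by simp
  also have "\<dots> = card {i. i < N \<and> lam i = \<mu>} + (if lam N = \<mu> then 1 else 0)"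
    using order_mult[OF nz] Suc.IH by (simp add: order_linear')
  also have "\<dots> = card {i. i < Suc N \<and> lam i = \<mu>}"
  proof (cases "lam N = \<mu>")
    case True
    then have "{i. i < Suc N \<and> lam i = \<mu>} = insert N {i. i < N \<and> lam i = \<mu>}" by auto
    then show ?thesis using True by simp
  next
    case False
    then have "{i. i < Suc N \<and> lam i = \<mu>} = {i. i < N \<and> lam i = \<mu>}" using less_Suc_eq by auto
    then show ?thesis using False by simp
  qed
  finally show ?case .
qed simp

definition adj :: "(nat \<Rightarrow> nat \<Rightarrow> bool) \<Rightarrow> nat \<Rightarrow> nat \<Rightarrow> real" where
  "adj E i j = (if E i j then 1 else 0)"

lemma index_mult_mat_lessThan:
  "A \<in> carrier_mat n m \<Longrightarrow> B \<in> carrier_mat m l \<Longrightarrow> i < n \<Longrightarrow> j < l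
    \<Longrightarrow> (A * B) $$ (i, j) = (\<Sum>k<m. A $$ (i, k) * B $$ (k, j))"
  by (simp add: scalar_prod_def atLeast0LessThan)

lemma similar_mat_wit_mult_right:
  assumes "similar_mat_wit A B P Q" "A \<in> carrier_mat n n"
  shows "A * P = P * B"
proof -
  have P: "P \<in> carrier_mat n n" and Q: "Q \<in> carrier_mat n n" and B: "B \<in> carrier_mat n n"
    and "Q * P = 1\<^sub>m n" "A = P * B * Q"
    using similar_mat_witD2[OF assms(2,1)] by auto
  then have "A * P = P * B * (Q * P)" using assoc_mult_mat[of "P * B" n n Q n P n] by simp
  then show ?thesis using P B \<open>Q * P = 1\<^sub>m n\<close> by simp
qed

lemma similar_mat_wit_mult_left:
  assumes "similar_mat_wit A B P Q" "A \<in> carrier_mat n n"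
  shows "Q * A = B * Q"
proof -
  have P: "P \<in> carrier_mat n n" and Q: "Q \<in> carrier_mat n n" and B: "B \<in> carrier_mat n n"
    and "Q * P = 1\<^sub>m n" "A = P * B * Q"
    using similar_mat_witD2[OF assms(2,1)] by auto
  then have "Q * A = (Q * P) * B * Q"
    using assoc_mult_mat[of Q n n P n B n] assoc_mult_mat[of Q n n "P * B" n Q n] by simp
  then show ?thesis using B Q \<open>Q * P = 1\<^sub>m n\<close> by simp
qed

lemma adj_matrix_eigenbasis:
  assumes graph: "simple_graph N E" and cp: "char_poly (adj_matrix N E) = (\<Prod>i<N. [:- lam i, 1:])"
  obtains V W ev where "eigenbasis N (adj E) V W ev"
    and "\<And>\<mu>. card {k. k < N \<and> ev k = \<mu>} = card {i. i < N \<and> lam i = \<mu>}"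
proof -
  define A where "A = adj_matrix N E"
  have A: "A \<in> carrier_mat N N" unfolding A_def adj_matrix_def by simp
  have A_ij: "A $$ (i, j) = adj E i j" if "i < N" "j < N" for i j
    using that unfolding A_def adj_matrix_def adj_def by simp
  have sym: "adj E i j = adj E j i" if "i < N" "j < N" for i j
    using graph that unfolding simple_graph_def adj_def by auto
  have "A\<^sup>T = A" using A by (intro eq_matI) (auto simp: A_ij sym)
  moreover have "(\<Prod>a\<leftarrow>map lam [0..<N]. [:- a, 1:]) = (\<Prod>i<N. [:- lam i, 1:])"
    by (induction N) (auto simp: mult.commute)
  ultimately obtain P Q ev where PQ: "similar_mat_wit A (mat_diag N ev) P Q"
    and order: "\<And>\<mu>. Polynomial.order \<mu> (char_poly A) = card {i. i < N \<and> ev i = \<mu>}"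
    using real_symmetric_mat_diagonalizable[OF A] cp unfolding A_def by metis
  have P: "P \<in> carrier_mat N N" and Q: "Q \<in> carrier_mat N N"
    and PQ_1: "P * Q = 1\<^sub>m N" and QP_1: "Q * P = 1\<^sub>m N"
    using similar_mat_witD2[OF A PQ] by auto
  note AP = similar_mat_wit_mult_right[OF PQ A] and QA = similar_mat_wit_mult_left[OF PQ A]
  show ?thesis
  proof (rule that)
    show "eigenbasis N (adj E) (\<lambda>k i. P $$ (i, k)) (\<lambda>k i. Q $$ (k, i)) ev"
    proof
      show "adj E i j = adj E j i" if "i < N" "j < N" for i j using sym that .
      show "matvec N (adj E) (\<lambda>i. P $$ (i, k)) i = ev k * P $$ (i, k)" if "k < N" "i < N" for k i
      proof -
        have "matvec N (adj E) (\<lambda>i. P $$ (i, k)) i = (A * P) $$ (i, k)"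
          unfolding index_mult_mat_lessThan[OF A P that(2,1)] matvec_def using that by (simp add: A_ij)
        then show ?thesis unfolding AP using P that by (simp add: mat_diag_mult_right)
      qed
      show "(\<Sum>j<N. Q $$ (k, j) * adj E j i) = ev k * Q $$ (k, i)" if "k < N" "i < N" for k i
      proof -
        have "(\<Sum>j<N. Q $$ (k, j) * adj E j i) = (Q * A) $$ (k, i)"
          unfolding index_mult_mat_lessThan[OF Q A that] using that by (simp add: A_ij)
        then show ?thesis unfolding QA using Q that by (simp add: mat_diag_mult_left)
      qed
      show "(\<Sum>k<N. P $$ (i, k) * Q $$ (k, j)) = (if i = j then 1 else 0)" if "i < N" "j < N" for i j
        using PQ_1 that by (simp add: index_mult_mat_lessThan[OF P Q that, symmetric])
      show "(\<Sum>j<N. Q $$ (k, j) * P $$ (j, l)) = (if k = l then 1 else 0)" if "k < N" "l < N" for k l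
        using QP_1 that by (simp add: index_mult_mat_lessThan[OF Q P that, symmetric])
    qed
    show "card {k. k < N \<and> ev k = \<mu>} = card {i. i < N \<and> lam i = \<mu>}" for \<mu>
      using order[of \<mu>] cp order_prod_linear_factors[where N = N and lam = lam] unfolding A_def by simp
  qed
qed

lemma card_level_sets_eq_imp_card_filter_eq:
  fixes N :: nat
  assumes "\<And>\<mu>. card {k. k < N \<and> f k = \<mu>} = card {i. i < N \<and> g i = \<mu>}"
  shows "card {k. k < N \<and> P (f k)} = card {i. i < N \<and> P (g i)}"
proof -
  let ?U = "{\<mu> \<in> f ` {..<N} \<union> g ` {..<N}. P \<mu>}"
  have "card {k. k < N \<and> P (h k)} = (\<Sum>\<mu>\<in>?U. card {k. k < N \<and> h k = \<mu>})"
    if "h = f \<or> h = g" for h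
  proof -
    have "{k. k < N \<and> P (h k)} = (\<Union>\<mu>\<in>?U. {k. k < N \<and> h k = \<mu>})" using that by auto
    moreover have "finite ?U" by (rule finite_subset[of _ "f ` {..<N} \<union> g ` {..<N}"]) auto
    ultimately show ?thesis by (simp only:) (subst card_UN_disjoint; auto)
  qed
  then show ?thesis using assms by simp
qed

locale gram_spectrum = eigenbasis +
  fixes lam :: "nat \<Rightarrow> real" and \<theta> s :: real
  assumes ev_lam_count: "\<And>\<mu>. card {k. k < N \<and> ev k = \<mu>} = card {i. i < N \<and> lam i = \<mu>}"
    and lam_antimono: "\<And>i j. i \<le> j \<Longrightarrow> j < N \<Longrightarrow> lam j \<le> lam i"
    and nonneg: "\<And>i j. i < N \<Longrightarrow> j < N \<Longrightarrow> 0 \<le> a i j"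
    and two_le_N: "2 \<le> N"
    and gram_form_nonneg: "\<And>x. 0 \<le> gram_form N a \<theta> s x"
    and gram_form_kernel: "\<exists>z. (\<exists>i<N. z i \<noteq> 0) \<and> (\<Sum>i<N. z i) = 0 \<and> gram_form N a \<theta> s z = 0"
begin

text \<open>The spectrum is indexed from 0, so \<open>lam 1\<close> is the second eigenvalue \<open>\<lambda>\<^sub>2\<close>.\<close>

definition second_mult :: nat where
  "second_mult = card {i. 1 \<le> i \<and> i < N \<and> lam i = lam 1}"

lemma ev_count: "card {k. k < N \<and> P (ev k)} = card {i. i < N \<and> P (lam i)}"
  by (rule card_level_sets_eq_imp_card_filter_eq[OF ev_lam_count])

lemma ev_le_lam0:
  assumes "k < N"
  shows "ev k \<le> lam 0"
proof -
  have "{i. i < N \<and> lam 0 < lam i} = {}" using lam_antimono[of 0] by force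
  then have "card {k. k < N \<and> lam 0 < ev k} = 0" using ev_count[of "\<lambda>\<mu>. lam 0 < \<mu>"] by simp
  then have "{k. k < N \<and> lam 0 < ev k} = {}" by simp
  then show ?thesis using assms by force
qed

lemma sum_zero_rayleigh_le: "(\<Sum>i<N. x i) = 0 \<Longrightarrow> dot N x (matvec N a x) \<le> \<theta> * dot N x x"
  using gram_form_nonneg[of x] unfolding gram_form_def by simp

lemma gram_form_eq_0_iff:
  assumes sum_0: "(\<Sum>i<N. x i) = 0"
  shows "gram_form N a \<theta> s x = 0 \<longleftrightarrow> (\<forall>i<N. matvec N a x i = \<theta> * x i)"
proof
  assume "gram_form N a \<theta> s x = 0"
  then show "\<forall>i<N. matvec N a x i = \<theta> * x i"
    using gram_form_zero_imp_matvec[OF symmetric gram_form_nonneg] sum_0 by simp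
next
  assume "\<forall>i<N. matvec N a x i = \<theta> * x i"
  then have "dot N x (matvec N a x) = dot N x (\<lambda>i. \<theta> * x i)" by (intro dot_cong) auto
  then show "gram_form N a \<theta> s x = 0" unfolding gram_form_def using sum_0 by (simp add: dot_scale_right)
qed

lemma sum_zero_eigenvector_exists:
  obtains z where "\<exists>i<N. z i \<noteq> 0" "(\<Sum>i<N. z i) = 0" "\<And>i. i < N \<Longrightarrow> matvec N a z i = \<theta> * z i"
  using gram_form_kernel gram_form_eq_0_iff by blast

lemma no_sum_zero_combination_above_theta:
  assumes "S \<subseteq> {..<N}" "\<And>k. k \<in> S \<Longrightarrow> \<theta> \<le> ev k"
    and "k0 \<in> S" "c k0 \<noteq> 0" "\<theta> < ev k0"
    and "(\<Sum>k\<in>S. c k * (\<Sum>i<N. V k i)) = 0"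
  shows False
proof -
  define x where "x i = (\<Sum>k\<in>S. c k * V k i)" for i
  have coord: "coord x k = (if k \<in> S then c k else 0)" if "k < N" for k
    unfolding x_def using assms(1) that by (rule coord_lincomb)
  have "(\<Sum>i<N. x i) = 0"
    using assms(6) unfolding x_def by (simp add: sum_distrib_left) (subst sum.swap, simp)
  then have "dot N x (matvec N a x) \<le> \<theta> * dot N x x" by (rule sum_zero_rayleigh_le)
  moreover have "\<theta> * dot N x x < dot N x (matvec N a x)"
    using assms coord by (intro rayleigh_less[of x \<theta> k0]) (auto split: if_splits)
  ultimately show False by simp
qed

lemma lam1_le_theta: "lam 1 \<le> \<theta>"
proof (rule ccontr)
  assume "\<not> lam 1 \<le> \<theta>"
  then have "{0, 1} \<subseteq> {i. i < N \<and> \<theta> < lam i}"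
    using lam_antimono[of 0 1] two_le_N by auto
  then have "2 \<le> card {i. i < N \<and> \<theta> < lam i}"
    using card_mono[of "{i. i < N \<and> \<theta> < lam i}" "{0, 1}"] by simp
  then have "\<not> card {k. k < N \<and> \<theta> < ev k} \<le> Suc 0" unfolding ev_count by simp
  then obtain i j where ij: "i < N" "j < N" "i \<noteq> j" "\<theta> < ev i" "\<theta> < ev j"
    using card_le_Suc0_iff_eq[of "{k. k < N \<and> \<theta> < ev k}"] by auto
  obtain c k0 where "k0 \<in> {i, j}" "c k0 \<noteq> 0" "(\<Sum>k\<in>{i, j}. (\<Sum>l<N. V k l) * c k) = 0"
    using exists_nonzero_solution[of "{()}" "{i, j}" "\<lambda>_ k. \<Sum>l<N. V k l"] ij by auto
  then show False
    by (intro no_sum_zero_combination_above_theta[of "{i, j}" k0 c]) (use ij in \<open>auto simp: mult.commute\<close>)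
qed

lemma theta_is_ev: "\<exists>k<N. ev k = \<theta>"
proof -
  obtain z where z: "\<exists>i<N. z i \<noteq> 0" "\<And>i. i < N \<Longrightarrow> matvec N a z i = \<theta> * z i"
    using sum_zero_eigenvector_exists by blast
  then obtain k where "k < N" "coord z k \<noteq> 0" using eq_0_if_coord_eq_0 by blast
  then show ?thesis using coord_eigenvector[OF z(2)] by blast
qed

lemma theta_le_lam0: "\<theta> \<le> lam 0"
  using theta_is_ev ev_le_lam0 by blast

text \<open>Perron-Frobenius argument: when \<open>\<theta>\<close> is the top eigenvalue of the nonnegative matrix
  \<open>A\<close>, with a \<open>\<theta>\<close>-eigenvector \<open>z\<close> also \<open>|z|\<close> is one, and \<open>|z|\<close> has positive sum.\<close>

lemma perron_eigenvector:
  assumes "\<And>k. k < N \<Longrightarrow> ev k \<le> \<theta>"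
  obtains j where "j < N" "ev j = \<theta>" "(\<Sum>i<N. V j i) \<noteq> 0"
proof -
  obtain z where z: "\<exists>i<N. z i \<noteq> 0" "\<And>i. i < N \<Longrightarrow> matvec N a z i = \<theta> * z i"
    using sum_zero_eigenvector_exists by blast
  define w where "w i = \<bar>z i\<bar>" for i
  have "\<theta> * dot N z z = dot N z (matvec N a z)"
    using dot_cong[of N z z "matvec N a z" "\<lambda>i. \<theta> * z i"] z(2) by (simp add: dot_scale_right)
  also have "\<dots> \<le> dot N w (matvec N a w)"
    unfolding dot_def matvec_def sum_distrib_left
  proof (intro sum_mono)
    fix i j assume "i \<in> {..<N}" "j \<in> {..<N}"
    then have "a i j * (z i * z j) \<le> a i j * (w i * w j)"
      unfolding w_def by (intro mult_left_mono) (auto simp: nonneg abs_mult[symmetric])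
    then show "z i * (a i j * z j) \<le> w i * (a i j * w j)" by (simp add: mult_ac)
  qed
  finally have "\<theta> * dot N z z \<le> dot N w (matvec N a w)" .
  moreover have "dot N z z = dot N w w" unfolding dot_def w_def by simp
  ultimately have "gram_form N a \<theta> 0 w \<le> 0" unfolding gram_form_def by simp
  moreover have psd: "0 \<le> gram_form N a \<theta> 0 y" for y
    using rayleigh_le[OF assms, of y] unfolding gram_form_def by simp
  ultimately have "gram_form N a \<theta> 0 w = 0" using psd[of w] by linarith
  then have w: "i < N \<Longrightarrow> matvec N a w i = \<theta> * w i" for i
    using gram_form_zero_imp_matvec[OF symmetric psd, of w i] by simp
  obtain i where "i < N" "w i \<noteq> 0" using z(1) unfolding w_def by auto
  then have "0 < (\<Sum>i<N. w i)"
    unfolding w_def by (intro sum_pos2[of _ i]) auto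
  then have "(\<Sum>k<N. coord w k * (\<Sum>i<N. V k i)) \<noteq> 0" using sum_eigen_expansion[of w] by simp
  then obtain k where "k \<in> {..<N}" "coord w k * (\<Sum>i<N. V k i) \<noteq> 0"
    by (rule sum.not_neutral_contains_not_neutral)
  moreover have "ev k = \<theta>" if "k < N" "coord w k \<noteq> 0"
    using coord_eigenvector[OF w that(1)] that(2) by blast
  ultimately show ?thesis using that by simp
qed

lemma image_ev_eq_image_lam: "ev ` {..<N} = lam ` {..<N}"
proof -
  have image: "\<mu> \<in> f ` {..<N} \<longleftrightarrow> card {k. k < N \<and> f k = \<mu>} \<noteq> 0"
    for f :: "nat \<Rightarrow> real" and \<mu>
    by (auto simp: card_eq_0_iff image_iff)
  have "\<mu> \<in> ev ` {..<N} \<longleftrightarrow> \<mu> \<in> lam ` {..<N}" for \<mu>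
    unfolding image[where f = ev] image[where f = lam] ev_lam_count ..
  then show ?thesis by auto
qed

lemma eigenvector_sum_eq_0:
  assumes "lam 0 \<noteq> \<theta>" "t < N" "ev t = \<theta>"
  shows "(\<Sum>i<N. V t i) = 0"
proof (rule ccontr)
  assume nz: "(\<Sum>i<N. V t i) \<noteq> 0"
  have "lam 0 \<in> ev ` {..<N}" using image_ev_eq_image_lam two_le_N by auto
  then obtain k where k: "k < N" "ev k = lam 0" by auto
  have "\<theta> < ev k" using k assms(1) theta_le_lam0 by simp
  have "k \<noteq> t" using \<open>\<theta> < ev k\<close> assms(3) by auto
  define c where "c s = (if s = k then 1 else - (\<Sum>i<N. V k i) / (\<Sum>i<N. V t i))" for s
  have "(\<Sum>s\<in>{k, t}. c s * (\<Sum>i<N. V s i)) = (\<Sum>i<N. V k i) + c t * (\<Sum>i<N. V t i)"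
    using \<open>k \<noteq> t\<close> by (simp add: c_def)
  also have "\<dots> = 0" using nz \<open>k \<noteq> t\<close> by (simp add: c_def)
  finally have sum_0: "(\<Sum>s\<in>{k, t}. c s * (\<Sum>i<N. V s i)) = 0" .
  show False
  proof (rule no_sum_zero_combination_above_theta[of "{k, t}" k c])
    show "\<theta> \<le> ev s" if "s \<in> {k, t}" for s using that assms \<open>\<theta> < ev k\<close> by auto
  qed (use assms k \<open>\<theta> < ev k\<close> sum_0 in \<open>auto simp: c_def\<close>)
qed

lemma sum_zero_eigenvector_eq_0:
  assumes j: "j < N" "(\<Sum>i<N. V j i) \<noteq> 0"
    and sum_x: "(\<Sum>i<N. x i) = 0" and eig: "\<And>i. i < N \<Longrightarrow> matvec N a x i = \<theta> * x i"
    and coord_x: "\<And>k. k < N \<Longrightarrow> k \<noteq> j \<Longrightarrow> ev k = \<theta> \<Longrightarrow> coord x k = 0" and "i < N"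
  shows "x i = 0"
proof -
  have off_j: "coord x k = 0" if "k < N" "k \<noteq> j" for k
    using coord_x coord_eigenvector[OF eig] that by blast
  then have "(\<Sum>i<N. x i) = coord x j * (\<Sum>i<N. V j i)"
    using sum_eigen_expansion[of x] j(1) by (simp add: sum.remove[of "{..<N}" j] sum.neutral)
  then have "coord x j = 0" using sum_x j(2) by simp
  then show "x i = 0" using off_j eq_0_if_coord_eq_0 \<open>i < N\<close> by metis
qed

lemma lam1_eq_theta: "lam 1 = \<theta>"
proof (rule ccontr)
  assume "lam 1 \<noteq> \<theta>"
  then have "lam 1 < \<theta>" using lam1_le_theta by simp
  have lam_\<theta>: "{i. i < N \<and> lam i = \<theta>} \<subseteq> {0}"
  proof
    fix i assume "i \<in> {i. i < N \<and> lam i = \<theta>}"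
    moreover have "lam i \<le> lam 1" if "1 \<le> i" "i < N" using lam_antimono that by blast
    ultimately show "i \<in> {0}" using \<open>lam 1 < \<theta>\<close> by (cases "i = 0") auto
  qed
  have "\<theta> \<in> lam ` {..<N}" using theta_is_ev image_ev_eq_image_lam by force
  then have "lam 0 = \<theta>" using lam_\<theta> by force
  then obtain j where j: "j < N" "ev j = \<theta>" "(\<Sum>i<N. V j i) \<noteq> 0"
    using perron_eigenvector ev_le_lam0 by blast
  have "card {k. k < N \<and> ev k = \<theta>} \<le> 1"
    unfolding ev_lam_count using lam_\<theta> card_mono[OF _ lam_\<theta>] by simp
  then have only_j: "k = j" if "k < N" "ev k = \<theta>" for k
    using j that card_le_Suc0_iff_eq[of "{k. k < N \<and> ev k = \<theta>}"] by auto
  obtain z where "\<exists>i<N. z i \<noteq> 0" "(\<Sum>i<N. z i) = 0" "\<And>i. i < N \<Longrightarrow> matvec N a z i = \<theta> * z i"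
    using sum_zero_eigenvector_exists by blast
  then show False using sum_zero_eigenvector_eq_0[OF j(1,3)] only_j by blast
qed

lemma second_mult_eq: "second_mult + (if lam 0 = \<theta> then 1 else 0) = card {i. i < N \<and> lam i = \<theta>}"
proof -
  define S where "S = {i. 1 \<le> i \<and> i < N \<and> lam i = lam 1}"
  have "{i. i < N \<and> lam i = \<theta>} = (if lam 0 = \<theta> then insert 0 S else S)"
    using lam1_eq_theta two_le_N unfolding S_def by (auto simp: not_less_eq_eq) (metis Suc_leI gr0I)
  moreover have "finite S" "0 \<notin> S" unfolding S_def by auto
  ultimately show ?thesis unfolding second_mult_def S_def[symmetric] by simp
qed

text \<open>\<open>X\<close> is a basis of the zero-sum \<open>\<theta>\<close>-eigenvectors, dual to the coordinates indexed by
  \<open>T\<close>.\<close>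

definition zero_sum_eigenbasis :: "nat set \<Rightarrow> (nat \<Rightarrow> nat \<Rightarrow> real) \<Rightarrow> bool" where
  "zero_sum_eigenbasis T X \<longleftrightarrow> finite T
    \<and> (\<forall>t\<in>T. (\<Sum>i<N. X t i) = 0 \<and> (\<forall>i<N. matvec N a (X t) i = \<theta> * X t i))
    \<and> (\<forall>t\<in>T. \<forall>k\<in>T. coord (X t) k = (if k = t then 1 else 0))
    \<and> (\<forall>x. (\<Sum>i<N. x i) = 0 \<longrightarrow> (\<forall>i<N. matvec N a x i = \<theta> * x i) \<longrightarrow> (\<forall>t\<in>T. coord x t = 0)
      \<longrightarrow> (\<forall>i<N. x i = 0))"

lemma zero_sum_eigenbasis_if_lam0_ne_theta:
  assumes "lam 0 \<noteq> \<theta>"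
  shows "zero_sum_eigenbasis {k. k < N \<and> ev k = \<theta>} V"
  unfolding zero_sum_eigenbasis_def
proof (intro conjI ballI allI impI)
  show "finite {k. k < N \<and> ev k = \<theta>}" by simp
  fix t assume t: "t \<in> {k. k < N \<and> ev k = \<theta>}"
  show "(\<Sum>i<N. V t i) = 0" using eigenvector_sum_eq_0[OF assms] t by blast
  show "matvec N a (V t) i = \<theta> * V t i" if "i < N" for i using eigenvector t that by simp
  show "coord (V t) k = (if k = t then 1 else 0)" if "k \<in> {k. k < N \<and> ev k = \<theta>}" for k
    using coord_V t that by simp
next
  fix x i
  assume eig: "\<forall>i<N. matvec N a x i = \<theta> * x i"
    and coord_x: "\<forall>t\<in>{k. k < N \<and> ev k = \<theta>}. coord x t = 0" and "i < N"
  have "coord x k = 0" if "k < N" for k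
  proof (cases "ev k = \<theta>")
    case False
    then show ?thesis using coord_eigenvector[of x \<theta> k] eig that by blast
  qed (use coord_x that in blast)
  then show "x i = 0" using eq_0_if_coord_eq_0 \<open>i < N\<close> by blast
qed

text \<open>When \<open>\<theta> = \<lambda>\<^sub>1\<close>, a Perron eigenvector has to be projected out; this is why \<open>\<lambda>\<^sub>1\<close> is not
  counted in the multiplicity.\<close>

lemma zero_sum_eigenbasis_if_lam0_eq_theta:
  assumes "lam 0 = \<theta>"
  obtains j X where "j < N" "ev j = \<theta>" "zero_sum_eigenbasis ({k. k < N \<and> ev k = \<theta>} - {j}) X"
proof -
  obtain j where j: "j < N" "ev j = \<theta>" "(\<Sum>i<N. V j i) \<noteq> 0"
    using perron_eigenvector ev_le_lam0 assms by blast
  define c where "c t s = (if s = t then 1 else - (\<Sum>i<N. V t i) / (\<Sum>i<N. V j i))" for t s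
  define X where "X t i = (\<Sum>s\<in>{t, j}. c t s * V s i)" for t i
  have "zero_sum_eigenbasis ({k. k < N \<and> ev k = \<theta>} - {j}) X"
    unfolding zero_sum_eigenbasis_def
  proof (intro conjI ballI allI impI)
    show "finite ({k. k < N \<and> ev k = \<theta>} - {j})" by simp
    fix t assume t: "t \<in> {k. k < N \<and> ev k = \<theta>} - {j}"
    show "(\<Sum>i<N. X t i) = 0"
      using t j unfolding X_def c_def
      by (simp add: sum_subtractf sum_divide_distrib[symmetric] sum_distrib_left[symmetric])
    show "matvec N a (X t) i = \<theta> * X t i" if "i < N" for i
      using t j that unfolding X_def by (subst matvec_lincomb) (auto simp: algebra_simps)
    show "coord (X t) k = (if k = t then 1 else 0)" if "k \<in> {k. k < N \<and> ev k = \<theta>} - {j}" for k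
      using t j that unfolding X_def by (subst coord_lincomb) (auto simp: c_def)
  next
    fix x i
    assume sum_x: "(\<Sum>i<N. x i) = 0" and eig: "\<forall>i<N. matvec N a x i = \<theta> * x i"
      and coord_x: "\<forall>t\<in>{k. k < N \<and> ev k = \<theta>} - {j}. coord x t = 0" and "i < N"
    show "x i = 0"
    proof (rule sum_zero_eigenvector_eq_0[OF j(1,3) sum_x _ _ \<open>i < N\<close>])
      show "matvec N a x i = \<theta> * x i" if "i < N" for i using eig that by blast
      show "coord x k = 0" if "k < N" "k \<noteq> j" "ev k = \<theta>" for k using coord_x that by blast
    qed
  qed
  with j(1,2) show ?thesis by (rule that)
qed

lemma zero_sum_eigenbasis_exists:
  obtains T X where "zero_sum_eigenbasis T X" "card T = second_mult"
proof (cases "lam 0 = \<theta>")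
  case True
  then obtain j X where j: "j < N" "ev j = \<theta>"
    and basis: "zero_sum_eigenbasis ({k. k < N \<and> ev k = \<theta>} - {j}) X"
    by (rule zero_sum_eigenbasis_if_lam0_eq_theta)
  have "card ({k. k < N \<and> ev k = \<theta>} - {j}) = second_mult"
    using second_mult_eq ev_lam_count[of \<theta>] True j by (simp add: card_Diff_singleton)
  then show ?thesis using that basis by blast
next
  case False
  then show ?thesis
    using that zero_sum_eigenbasis_if_lam0_ne_theta second_mult_eq ev_lam_count by auto
qed

lemma sum_zero_rayleigh_max_unique:
  assumes max: "\<And>x. (\<Sum>i<N. x i) = 0 \<Longrightarrow> dot N x (matvec N a x) \<le> \<theta>' * dot N x x"
    and x: "\<exists>i<N. x i \<noteq> 0" "(\<Sum>i<N. x i) = 0" "dot N x (matvec N a x) = \<theta>' * dot N x x"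
  shows "\<theta>' = \<theta>"
proof -
  obtain z where z: "\<exists>i<N. z i \<noteq> 0" "(\<Sum>i<N. z i) = 0" "\<And>i. i < N \<Longrightarrow> matvec N a z i = \<theta> * z i"
    using sum_zero_eigenvector_exists by blast
  have "dot N z (matvec N a z) = dot N z (\<lambda>i. \<theta> * z i)" using z(3) by (intro dot_cong) auto
  then have "\<theta> * dot N z z \<le> \<theta>' * dot N z z" using max[OF z(2)] by (simp add: dot_scale_right)
  moreover have "\<theta>' * dot N x x \<le> \<theta> * dot N x x" using sum_zero_rayleigh_le[OF x(2)] x(3) by simp
  moreover have "0 < dot N z z" "0 < dot N x x" using z(1) x(1) dot_self_pos by blast+
  ultimately show ?thesis by (simp add: order_antisym)
qed

lemma second_mult_lower_bound:
  assumes "\<And>x i. (\<Sum>i<N. x i) = 0 \<Longrightarrow> (\<And>r. r < n \<Longrightarrow> (\<Sum>i<N. L r i * x i) = 0) \<Longrightarrow> i < N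
      \<Longrightarrow> matvec N a x i = \<theta> * x i"
  shows "N - 1 - n \<le> second_mult"
proof (rule ccontr)
  assume "\<not> N - 1 - n \<le> second_mult"
  then have small: "n + 1 + second_mult < N" by simp
  obtain T X where basis: "zero_sum_eigenbasis T X" and card_T: "card T = second_mult"
    by (rule zero_sum_eigenbasis_exists)
  then have fin: "finite T"
    and complete: "\<And>x. (\<Sum>i<N. x i) = 0 \<Longrightarrow> \<forall>i<N. matvec N a x i = \<theta> * x i
        \<Longrightarrow> \<forall>t\<in>T. coord x t = 0 \<Longrightarrow> \<forall>i<N. x i = 0"
    unfolding zero_sum_eigenbasis_def by blast+
  \<comment> \<open>equations \<open>Inl r\<close> for the constraints (\<open>r < n\<close>) and the zero sum (\<open>r = n\<close>),
    equations \<open>Inr t\<close> for the coordinates in \<open>T\<close>\<close>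
  define R where "R = Inl ` {..n} \<union> Inr ` T"
  define C where "C r i = (case r of Inl r \<Rightarrow> if r = n then 1 else L r i | Inr t \<Rightarrow> W t i)" for r i
  have "finite R" unfolding R_def using fin by simp
  have "card R \<le> card {..n} + card T" unfolding R_def
    by (rule order_trans[OF card_Un_le]) (simp add: card_image)
  also have "\<dots> < card {..<N}" using small card_T by simp
  finally obtain x where x: "\<exists>j\<in>{..<N}. x j \<noteq> 0" "\<forall>r\<in>R. (\<Sum>j<N. C r j * x j) = 0"
    using exists_nonzero_solution[OF \<open>finite R\<close> finite_lessThan] by blast
  have sum_x: "(\<Sum>i<N. x i) = 0" using x(2)[rule_format, of "Inl n"] unfolding R_def C_def by simp
  have L_x: "(\<Sum>i<N. L r i * x i) = 0" if "r < n" for r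
    using x(2)[rule_format, of "Inl r"] that unfolding R_def C_def by simp
  have coord_x: "coord x t = 0" if "t \<in> T" for t
    using x(2)[rule_format, of "Inr t"] that unfolding R_def C_def coord_def by simp
  have "\<forall>i<N. x i = 0" using complete[OF sum_x] assms[OF sum_x L_x] coord_x by blast
  then show False using x(1) by auto
qed

end

definition orthonormal :: "nat \<Rightarrow> nat \<Rightarrow> (nat \<Rightarrow> nat \<Rightarrow> real) \<Rightarrow> bool" where
  "orthonormal m r e \<longleftrightarrow> (\<forall>s<r. \<forall>t<r. dot m (e s) (e t) = (if s = t then 1 else 0))"

definition in_span :: "nat \<Rightarrow> nat \<Rightarrow> (nat \<Rightarrow> nat \<Rightarrow> real) \<Rightarrow> (nat \<Rightarrow> real) \<Rightarrow> (nat \<Rightarrow> real) \<Rightarrow> bool"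
  where "in_span m r e \<beta> x \<longleftrightarrow> (\<forall>k<m. x k = (\<Sum>s<r. \<beta> s * e s k))"

lemma dot_in_span_left: "in_span m r e \<beta> x \<Longrightarrow> dot m x y = (\<Sum>s<r. \<beta> s * dot m (e s) y)"
  unfolding in_span_def using dot_cong[of m x "\<lambda>k. \<Sum>s<r. \<beta> s * e s k" y y]
  by (simp add: dot_lincomb_left)

lemma dot_orthonormal_in_span:
  assumes "orthonormal m r e" "in_span m r e \<beta> x" "t < r"
  shows "dot m x (e t) = \<beta> t"
proof -
  have "dot m x (e t) = (\<Sum>s<r. if s = t then \<beta> s else 0)"
    unfolding dot_in_span_left[OF assms(2)] using assms(1,3)
    by (intro sum.cong) (auto simp: orthonormal_def)
  then show ?thesis using assms(3) by simp
qed

lemma dot_self_orthonormal_in_span: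
  assumes "orthonormal m r e" "in_span m r e \<beta> x"
  shows "dot m x x = (\<Sum>s<r. (\<beta> s)\<^sup>2)"
  unfolding dot_in_span_left[OF assms(2)] using dot_orthonormal_in_span[OF assms]
  by (intro sum.cong) (simp_all add: dot_commute[of m _ x] power2_eq_square)

lemma in_span_Suc: "in_span m r e \<beta> x \<Longrightarrow> in_span m (Suc r) (e(r := v)) (\<beta>(r := 0)) x"
  unfolding in_span_def by simp

lemma in_span_add:
  "in_span m r e \<beta> x \<Longrightarrow> in_span m r e \<beta>' x' \<Longrightarrow> in_span m r e (\<lambda>s. \<beta> s + \<beta>' s) (\<lambda>k. x k + x' k)"
  unfolding in_span_def by (simp add: distrib_right sum.distrib)

lemma in_span_diff:
  "in_span m r e \<beta> x \<Longrightarrow> in_span m r e \<beta>' x' \<Longrightarrow> in_span m r e (\<lambda>s. \<beta> s - \<beta>' s) (\<lambda>k. x k - x' k)"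
  unfolding in_span_def by (simp add: left_diff_distrib sum_subtractf)

lemma in_span_scale: "in_span m r e \<beta> x \<Longrightarrow> in_span m r e (\<lambda>s. c * \<beta> s) (\<lambda>k. c * x k)"
  unfolding in_span_def by (simp add: sum_distrib_left mult.assoc)

lemma in_span_lincomb:
  assumes "\<And>t. t \<in> T \<Longrightarrow> in_span m r e (\<beta> t) (x t)"
  shows "in_span m r e (\<lambda>s. \<Sum>t\<in>T. c t * \<beta> t s) (\<lambda>k. \<Sum>t\<in>T. c t * x t k)"
  unfolding in_span_def
proof (intro allI impI)
  fix k assume "k < m"
  then have "(\<Sum>t\<in>T. c t * x t k) = (\<Sum>t\<in>T. \<Sum>s<r. c t * \<beta> t s * e s k)"
    using assms unfolding in_span_def by (intro sum.cong) (simp_all add: sum_distrib_left mult.assoc)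
  also have "\<dots> = (\<Sum>s<r. (\<Sum>t\<in>T. c t * \<beta> t s) * e s k)"
    by (subst sum.swap) (simp add: sum_distrib_right)
  finally show "(\<Sum>t\<in>T. c t * x t k) = (\<Sum>s<r. (\<Sum>t\<in>T. c t * \<beta> t s) * e s k)" .
qed

lemma orthonormal_extend:
  assumes on: "orthonormal m r e" and orth: "\<And>s. s < r \<Longrightarrow> dot m z (e s) = 0"
    and "dot m z z \<noteq> 0"
  shows "orthonormal m (Suc r) (e(r := (\<lambda>k. z k / sqrt (dot m z z))))" (is "orthonormal m _ ?e")
proof -
  have "0 < dot m z z" using dot_self_nonneg[of m z] assms(3) by simp
  have "dot m (?e r) (?e r) = dot m z z / (sqrt (dot m z z) * sqrt (dot m z z))"
    unfolding dot_def by (simp add: sum_divide_distrib)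
  then have unit: "dot m (?e r) (?e r) = 1" using \<open>0 < dot m z z\<close> by simp
  have "dot m (?e r) (e s) = dot m z (e s) / sqrt (dot m z z)" for s
    unfolding dot_def by (simp add: sum_divide_distrib)
  then have orth': "dot m (?e r) (e s) = 0" "dot m (e s) (?e r) = 0" if "s < r" for s
    using orth[OF that] by (simp_all add: dot_commute[of m "e s"])
  show ?thesis
    unfolding orthonormal_def
  proof (intro allI impI)
    fix s t assume "s < Suc r" "t < Suc r"
    then consider "s < r" "t < r" | "s = r" "t < r" | "s < r" "t = r" | "s = r" "t = r"
      by (auto simp: less_Suc_eq)
    then show "dot m (?e s) (?e t) = (if s = t then 1 else 0)"
      by cases (use on unit orth' in \<open>auto simp: orthonormal_def\<close>)
  qed
qed

lemma gram_schmidt: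
  fixes w :: "nat \<Rightarrow> nat \<Rightarrow> real"
  shows "\<exists>r e. orthonormal m r e \<and> (\<forall>i<K. \<exists>\<beta>. in_span m r e \<beta> (w i))
    \<and> (\<forall>s<r. \<exists>\<gamma>. in_span m K w \<gamma> (e s))"
proof (induction K)
  case 0
  show ?case by (intro exI[of _ 0]) (simp add: orthonormal_def)
next
  case (Suc K)
  then obtain r e where on: "orthonormal m r e" and w_span: "\<forall>i<K. \<exists>\<beta>. in_span m r e \<beta> (w i)"
    and e_span: "\<forall>s<r. \<exists>\<gamma>. in_span m K w \<gamma> (e s)" by blast
  have "\<forall>s. \<exists>\<gamma>. s < r \<longrightarrow> in_span m (Suc K) w \<gamma> (e s)"
    using e_span in_span_Suc[of m K w _ _ "w K"] by (metis fun_upd_triv)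
  then obtain \<Gamma> where \<Gamma>: "\<And>s. s < r \<Longrightarrow> in_span m (Suc K) w (\<Gamma> s) (e s)"
    by metis
  define b where "b s = dot m (w K) (e s)" for s
  define z where "z k = w K k - (\<Sum>s<r. b s * e s k)" for k
  have "in_span m r e b (\<lambda>k. \<Sum>s<r. b s * e s k)" unfolding in_span_def by simp
  then have z_orth: "dot m z (e t) = 0" if "t < r" for t
    using dot_orthonormal_in_span[OF on _ that]
    unfolding z_def dot_def b_def by (simp add: left_diff_distrib sum_subtractf)
  have "in_span m (Suc K) w (\<lambda>i. if i = K then 1 else 0) (w K)" unfolding in_span_def by simp
  then have z_span: "in_span m (Suc K) w
      (\<lambda>i. (if i = K then 1 else 0) - (\<Sum>s<r. b s * \<Gamma> s i)) z"
    unfolding z_def using \<Gamma> by (intro in_span_diff in_span_lincomb) auto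
  show ?case
  proof (cases "dot m z z = 0")
    case True
    then have "in_span m r e b (w K)" unfolding dot_self_eq_0_iff z_def in_span_def by simp
    then show ?thesis
      using on w_span \<Gamma> by (intro exI[of _ r] exI[of _ e]) (auto simp: less_Suc_eq)
  next
    case False
    define \<nu> where "\<nu> = sqrt (dot m z z)"
    have \<nu>: "0 < \<nu>" using False dot_self_nonneg[of m z] unfolding \<nu>_def by simp
    define e' where "e' = e(r := (\<lambda>k. z k / \<nu>))"
    have "orthonormal m (Suc r) e'"
      unfolding e'_def \<nu>_def using on z_orth False by (rule orthonormal_extend)
    moreover have "\<forall>i<Suc K. \<exists>\<beta>. in_span m (Suc r) e' \<beta> (w i)"
    proof -
      have "in_span m (Suc r) e' (b(r := \<nu>)) (w K)" unfolding in_span_def e'_def z_def using \<nu> by simp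
      moreover have "\<exists>\<beta>. in_span m (Suc r) e' \<beta> (w i)" if "i < K" for i
        using w_span that in_span_Suc unfolding e'_def by blast
      ultimately show ?thesis by (auto simp: less_Suc_eq)
    qed
    moreover have "\<forall>s<Suc r. \<exists>\<gamma>. in_span m (Suc K) w \<gamma> (e' s)"
    proof -
      have "\<exists>\<gamma>. in_span m (Suc K) w \<gamma> (e' r)"
        using in_span_scale[OF z_span, of "1 / \<nu>"] unfolding e'_def by auto
      then show ?thesis using \<Gamma> unfolding e'_def by (auto simp: less_Suc_eq)
    qed
    ultimately show ?thesis by blast
  qed
qed

text \<open>The members of \<open>e\<close> are combinations of the points with total weight zero, so this bounds
  the dimension of the affine hull of points with \<open>|J|\<close> independent affine dependencies.\<close>

lemma orthonormal_affine_dim_bound: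
  fixes p X \<Gamma> :: "nat \<Rightarrow> nat \<Rightarrow> real"
  assumes on: "orthonormal m r e"
    and e: "\<And>s. s < r \<Longrightarrow> in_span m N p (\<Gamma> s) (e s)" and \<Gamma>: "\<And>s. s < r \<Longrightarrow> (\<Sum>i<N. \<Gamma> s i) = 0"
    and fin: "finite J" and sum_X: "\<And>t. t \<in> J \<Longrightarrow> (\<Sum>i<N. X t i) = 0"
    and dep_X: "\<And>t k. t \<in> J \<Longrightarrow> k < m \<Longrightarrow> (\<Sum>i<N. X t i * p i k) = 0"
    and indep_X: "\<And>\<beta>. (\<forall>i<N. (\<Sum>t\<in>J. \<beta> t * X t i) = 0) \<Longrightarrow> \<forall>t\<in>J. \<beta> t = 0"
    and "0 < N"
  shows "r + card J < N"
proof (rule ccontr)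
  assume "\<not> r + card J < N"
  then have "card {1..<N} < card (J <+> {..<r})" using fin \<open>0 < N\<close> by (simp add: card_Plus)
  then obtain y where y: "\<exists>u\<in>J <+> {..<r}. y u \<noteq> 0"
    and rows: "\<forall>i\<in>{1..<N}. (\<Sum>u\<in>J <+> {..<r}. case_sum (\<lambda>t. X t i) (\<lambda>s. \<Gamma> s i) u * y u) = 0"
    using exists_nonzero_solution[of "{1..<N}" "J <+> {..<r}" "\<lambda>i. case_sum (\<lambda>t. X t i) (\<lambda>s. \<Gamma> s i)"] fin
    by auto
  define \<beta> where "\<beta> t = y (Inl t)" for t
  define \<zeta> where "\<zeta> s = y (Inr s)" for s
  define Y where "Y i = (\<Sum>t\<in>J. \<beta> t * X t i) + (\<Sum>s<r. \<zeta> s * \<Gamma> s i)" for i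
  have "Y i = 0" if "1 \<le> i" "i < N" for i
    using rows[rule_format, of i] that fin unfolding Y_def \<beta>_def \<zeta>_def
    by (simp add: sum.Plus mult.commute)
  moreover have "(\<Sum>i<N. Y i) = (\<Sum>t\<in>J. \<beta> t * (\<Sum>i<N. X t i)) + (\<Sum>s<r. \<zeta> s * (\<Sum>i<N. \<Gamma> s i))"
    unfolding Y_def sum.distrib by (simp add: sum_distrib_left sum.swap[of _ "{..<N}"])
  then have "(\<Sum>i<N. Y i) = 0" using sum_X \<Gamma> by simp
  ultimately have Y: "Y i = 0" if "i < N" for i
    using that sum.remove[of "{..<N}" 0 Y] by (cases "i = 0") (auto simp: sum.neutral)
  have "in_span m r e \<zeta> (\<lambda>k. 0)" unfolding in_span_def
  proof (intro allI impI)
    fix k assume "k < m"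
    have "(\<Sum>s<r. \<zeta> s * e s k) = (\<Sum>s<r. \<zeta> s * (\<Sum>i<N. \<Gamma> s i * p i k))"
      using e \<open>k < m\<close> unfolding in_span_def by simp
    also have "\<dots> = (\<Sum>i<N. Y i * p i k) - (\<Sum>t\<in>J. \<beta> t * (\<Sum>i<N. X t i * p i k))"
      unfolding Y_def by (simp add: sum_distrib_left sum_distrib_right algebra_simps sum.swap[of _ "{..<N}"])
    also have "\<dots> = 0" using Y dep_X \<open>k < m\<close> by simp
    finally show "0 = (\<Sum>s<r. \<zeta> s * e s k)" by simp
  qed
  then have \<zeta>: "\<zeta> s = 0" if "s < r" for s
    using dot_orthonormal_in_span[OF on _ that, of \<zeta> "\<lambda>k. 0"] by (simp add: dot_def)
  then have "\<forall>t\<in>J. \<beta> t = 0" using Y unfolding Y_def by (intro indep_X) simp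
  then show False using y \<zeta> unfolding \<beta>_def \<zeta>_def by auto
qed

text \<open>Points of a sphere whose differences span an \<open>r\<close>-dimensional space, \<open>r \<le> n\<close>, have an
  isometric copy on a sphere of \<open>\<real>\<^sup>n\<close>: use coordinates with respect to an orthonormal basis
  of that space, and project the centre onto the affine hull of the points.\<close>

lemma sphere_isometric_copy:
  fixes p B :: "nat \<Rightarrow> nat \<Rightarrow> real"
  assumes on: "orthonormal m r e" and "r \<le> n"
    and span: "\<And>i. i < N \<Longrightarrow> in_span m r e (B i) (\<lambda>k. p i k - p 0 k)"
    and sph: "\<And>i. i < N \<Longrightarrow> (\<Sum>k<m. (p i k - c k)\<^sup>2) = \<rho>"
  obtains p' c' \<rho>' where "\<And>i. i < N \<Longrightarrow> in_Rm n (p' i)" and "in_Rm n c'"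
    and "\<And>i j. i < N \<Longrightarrow> j < N \<Longrightarrow> (\<Sum>k<n. (p' i k - p' j k)\<^sup>2) = (\<Sum>k<m. (p i k - p j k)\<^sup>2)"
    and "\<And>i. i < N \<Longrightarrow> (\<Sum>k<n. (p' i k - c' k)\<^sup>2) = \<rho>'"
proof -
  define b where "b s = dot m (\<lambda>k. p 0 k - c k) (e s)" for s
  define h where "h k = (\<Sum>s<r. b s * e s k)" for k
  define g where "g k = p 0 k - c k - h k" for k
  have h: "in_span m r e b h" unfolding in_span_def h_def by simp
  have g_orth: "dot m (e s) g = 0" if "s < r" for s
  proof -
    have "dot m (e s) g = b s - dot m h (e s)"
      unfolding g_def b_def dot_def by (simp add: algebra_simps sum_subtractf)
    then show ?thesis using dot_orthonormal_in_span[OF on h that] by simp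
  qed
  define p' where "p' i k = (if k < r then B i k else 0)" for i k
  define c' where "c' k = (if k < r then - b k else 0)" for k
  have truncate: "(\<Sum>k<n. f k) = (\<Sum>k<r. f k)" if "\<And>k. r \<le> k \<Longrightarrow> f k = 0" for f :: "nat \<Rightarrow> real"
    using that \<open>r \<le> n\<close> by (intro sum.mono_neutral_right) auto
  show ?thesis
  proof (rule that[of p' c' "\<rho> - dot m g g"])
    show "in_Rm n (p' i)" for i using \<open>r \<le> n\<close> unfolding in_Rm_def p'_def by simp
    show "in_Rm n c'" using \<open>r \<le> n\<close> unfolding in_Rm_def c'_def by simp
    fix i assume i: "i < N"
    show "(\<Sum>k<n. (p' i k - p' j k)\<^sup>2) = (\<Sum>k<m. (p i k - p j k)\<^sup>2)" if j: "j < N" for j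
    proof -
      have "in_span m r e (\<lambda>s. B i s - B j s) (\<lambda>k. (p i k - p 0 k) - (p j k - p 0 k))"
        by (rule in_span_diff[OF span[OF i] span[OF j]])
      then have "dot m (\<lambda>k. p i k - p j k) (\<lambda>k. p i k - p j k) = (\<Sum>s<r. (B i s - B j s)\<^sup>2)"
        using dot_self_orthonormal_in_span[OF on] by simp
      then show ?thesis by (subst truncate) (simp_all add: p'_def dot_def power2_eq_square)
    qed
    have "in_span m r e (\<lambda>s. B i s + b s) (\<lambda>k. (p i k - p 0 k) + h k)"
      using span[OF i] h by (rule in_span_add)
    then have "dot m (\<lambda>k. p i k - p 0 k + h k) (\<lambda>k. p i k - p 0 k + h k) = (\<Sum>s<r. (B i s + b s)\<^sup>2)"
      and "dot m (\<lambda>k. p i k - p 0 k + h k) g = 0"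
      using dot_self_orthonormal_in_span[OF on] dot_in_span_left g_orth by simp_all
    moreover have "\<rho> = dot m (\<lambda>k. (p i k - p 0 k + h k) + g k) (\<lambda>k. (p i k - p 0 k + h k) + g k)"
      using sph[OF i] unfolding dot_def g_def by (simp add: power2_eq_square)
    ultimately have "\<rho> = (\<Sum>s<r. (B i s + b s)\<^sup>2) + dot m g g" unfolding dot_add_self by simp
    then show "(\<Sum>k<n. (p' i k - c' k)\<^sup>2) = \<rho> - dot m g g"
      by (subst truncate) (simp_all add: p'_def c'_def)
  qed
qed

lemma in_Rm_eqI:
  assumes "in_Rm m x" "in_Rm m y" "(\<Sum>k<m. (x k - y k)\<^sup>2) = 0"
  shows "x = y"
proof
  fix k
  show "x k = y k"
  proof (cases "k < m")
    case True
    then show ?thesis using assms(3) by (simp add: sum_nonneg_eq_0_iff)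
  next
    case False
    then show ?thesis using assms(1,2) unfolding in_Rm_def by simp
  qed
qed

lemma two_dist_rep_isometric_copy:
  assumes rep: "two_dist_rep m N E p" and in_Rm: "\<And>i. i < N \<Longrightarrow> in_Rm n (p' i)"
    and dist: "\<And>i j. i < N \<Longrightarrow> j < N \<Longrightarrow> (\<Sum>k<n. (p' i k - p' j k)\<^sup>2) = (\<Sum>k<m. (p i k - p j k)\<^sup>2)"
  shows "two_dist_rep n N E p'"
proof -
  have edist: "edist n (p' i) (p' j) = edist m (p i) (p j)" if "i < N" "j < N" for i j
    unfolding edist_def using dist that by simp
  have "inj_on p' {..<N}"
  proof (rule inj_onI)
    fix i j assume ij: "i \<in> {..<N}" "j \<in> {..<N}" and "p' i = p' j"
    then have "(\<Sum>k<m. (p i k - p j k)\<^sup>2) = 0" using dist[of i j] ij by simp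
    then have "p i = p j" using rep ij unfolding two_dist_rep_def by (intro in_Rm_eqI) auto
    then show "i = j" using rep ij unfolding two_dist_rep_def inj_on_def by blast
  qed
  moreover have "{edist n (p' i) (p' j) | i j. i < N \<and> j < N \<and> i \<noteq> j}
      = {edist m (p i) (p j) | i j. i < N \<and> j < N \<and> i \<noteq> j}"
    by (intro Collect_cong) (metis edist)
  moreover obtain a1 a2 where "a2 < a1"
    and "{edist m (p i) (p j) | i j. i < N \<and> j < N \<and> i \<noteq> j} = {a1, a2}"
    and "\<forall>i<N. \<forall>j<N. i \<noteq> j \<longrightarrow> (E i j \<longleftrightarrow> edist m (p i) (p j) = a1)"
    using rep unfolding two_dist_rep_def by blast
  ultimately show ?thesis
    unfolding two_dist_rep_def using in_Rm edist by (intro conjI exI[of _ a1] exI[of _ a2]) auto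
qed

lemma spherically_representable_if_isometric_copy:
  assumes rep: "two_dist_rep m N E p" and "2 \<le> N"
    and in_Rm: "\<And>i. i < N \<Longrightarrow> in_Rm n (p' i)" "in_Rm n c'"
    and dist: "\<And>i j. i < N \<Longrightarrow> j < N \<Longrightarrow> (\<Sum>k<n. (p' i k - p' j k)\<^sup>2) = (\<Sum>k<m. (p i k - p j k)\<^sup>2)"
    and sph: "\<And>i. i < N \<Longrightarrow> (\<Sum>k<n. (p' i k - c' k)\<^sup>2) = \<rho>"
  shows "spherically_representable n N E"
proof -
  have rep': "two_dist_rep n N E p'" using two_dist_rep_isometric_copy[OF rep in_Rm(1) dist] .
  have "0 < \<rho>"
  proof (rule ccontr)
    assume "\<not> 0 < \<rho>"
    moreover have "0 \<le> \<rho>" using sph[of 0] \<open>2 \<le> N\<close> sum_nonneg[of "{..<n}" "\<lambda>k. (p' 0 k - c' k)\<^sup>2"] by simp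
    ultimately have "p' i = c'" if "i < N" for i
      using sph[OF that] in_Rm that by (intro in_Rm_eqI) auto
    then have "p' 0 = p' 1" using \<open>2 \<le> N\<close> by simp
    moreover have "inj_on p' {..<N}" using rep' unfolding two_dist_rep_def by blast
    ultimately show False using \<open>2 \<le> N\<close> inj_onD[of p' "{..<N}" 0 1] by simp
  qed
  then show ?thesis
    unfolding spherically_representable_def using rep' in_Rm(2) sph
    by (intro exI[of _ p'] exI[of _ c'] exI[of _ "sqrt \<rho>"]) (simp add: edist_def)
qed

lemma spherically_representable_if_affine_dependencies:
  fixes p X :: "nat \<Rightarrow> nat \<Rightarrow> real"
  assumes rep: "two_dist_rep m N E p" and "2 \<le> N"
    and sph: "\<And>i. i < N \<Longrightarrow> (\<Sum>k<m. (p i k - c k)\<^sup>2) = \<rho>"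
    and fin: "finite J" and card_J: "N \<le> card J + n + 1"
    and sum_X: "\<And>t. t \<in> J \<Longrightarrow> (\<Sum>i<N. X t i) = 0"
    and dep_X: "\<And>t k. t \<in> J \<Longrightarrow> k < m \<Longrightarrow> (\<Sum>i<N. X t i * p i k) = 0"
    and indep_X: "\<And>\<beta>. (\<forall>i<N. (\<Sum>t\<in>J. \<beta> t * X t i) = 0) \<Longrightarrow> \<forall>t\<in>J. \<beta> t = 0"
  shows "spherically_representable n N E"
proof -
  obtain r e where on: "orthonormal m r e"
    and p_span: "\<forall>i<N. \<exists>\<beta>. in_span m r e \<beta> (\<lambda>k. p i k - p 0 k)"
    and e_span: "\<forall>s<r. \<exists>\<gamma>. in_span m N (\<lambda>i k. p i k - p 0 k) \<gamma> (e s)"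
    using gram_schmidt[of m N "\<lambda>i k. p i k - p 0 k"] by blast
  obtain B where B: "\<And>i. i < N \<Longrightarrow> in_span m r e (B i) (\<lambda>k. p i k - p 0 k)"
    using p_span by metis
  obtain \<gamma> where \<gamma>: "\<And>s. s < r \<Longrightarrow> in_span m N (\<lambda>i k. p i k - p 0 k) (\<gamma> s) (e s)"
    using e_span by metis
  define \<Gamma> where "\<Gamma> s i = \<gamma> s i - (if i = 0 then (\<Sum>j<N. \<gamma> s j) else 0)" for s i
  have "r + card J < N"
  proof (rule orthonormal_affine_dim_bound[OF on _ _ fin sum_X dep_X indep_X])
    have p0: "(\<Sum>i<N. (if i = 0 then G else 0) * p i k) = G * p 0 k" for G k
      using \<open>2 \<le> N\<close> by (simp add: if_distrib[of "\<lambda>x. x * p _ k"] cong: if_cong)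
    show "in_span m N p (\<Gamma> s) (e s)" if "s < r" for s
      using \<gamma>[OF that] unfolding in_span_def \<Gamma>_def
      by (simp add: left_diff_distrib right_diff_distrib sum_subtractf sum_distrib_right p0)
    show "(\<Sum>i<N. \<Gamma> s i) = 0" for s
      using \<open>2 \<le> N\<close> unfolding \<Gamma>_def by (simp add: sum_subtractf)
    show "0 < N" using \<open>2 \<le> N\<close> by simp
  qed
  then have "r \<le> n" using card_J by linarith
  then obtain p' c' \<rho>' where in_Rm: "\<And>i. i < N \<Longrightarrow> in_Rm n (p' i)" "in_Rm n c'"
    and dist: "\<And>i j. i < N \<Longrightarrow> j < N \<Longrightarrow> (\<Sum>k<n. (p' i k - p' j k)\<^sup>2) = (\<Sum>k<m. (p i k - p j k)\<^sup>2)"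
    and sph': "\<And>i. i < N \<Longrightarrow> (\<Sum>k<n. (p' i k - c' k)\<^sup>2) = \<rho>'"
    using sphere_isometric_copy[where p = p and N = N, OF on \<open>r \<le> n\<close> B sph] by blast
  show ?thesis by (rule spherically_representable_if_isometric_copy[OF rep \<open>2 \<le> N\<close> in_Rm dist sph'])
qed

lemma edist_sq: "(edist m x y)\<^sup>2 = (\<Sum>k<m. (x k - y k)\<^sup>2)"
  unfolding edist_def by (simp add: sum_nonneg)

lemma two_dist_rep_sq_dist:
  assumes rep: "two_dist_rep m N E p" and graph: "simple_graph N E"
  obtains A2 A1 where "A2 < A1"
    and "\<And>i j. i < N \<Longrightarrow> j < N
      \<Longrightarrow> (\<Sum>k<m. (p i k - p j k)\<^sup>2) = A2 + (A1 - A2) * adj E i j - (if i = j then A2 else 0)"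
proof -
  have "\<exists>a1 a2. a2 < a1 \<and> {edist m (p i) (p j) | i j. i < N \<and> j < N \<and> i \<noteq> j} = {a1, a2}
      \<and> (\<forall>i<N. \<forall>j<N. i \<noteq> j \<longrightarrow> (E i j \<longleftrightarrow> edist m (p i) (p j) = a1))"
    using rep unfolding two_dist_rep_def by (rule conjunct2[THEN conjunct2])
  then obtain a1 a2 where "a2 < a1"
    and dists: "{edist m (p i) (p j) | i j. i < N \<and> j < N \<and> i \<noteq> j} = {a1, a2}"
    and E: "\<forall>i<N. \<forall>j<N. i \<noteq> j \<longrightarrow> (E i j \<longleftrightarrow> edist m (p i) (p j) = a1)"
    by (elim exE conjE)
  have "a2 \<in> {edist m (p i) (p j) | i j. i < N \<and> j < N \<and> i \<noteq> j}" unfolding dists by simp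
  then obtain i j where "a2 = edist m (p i) (p j)" by blast
  then have "0 \<le> a2" unfolding edist_def by (simp add: sum_nonneg)
  show ?thesis
  proof (rule that[of "a2\<^sup>2" "a1\<^sup>2"])
    show "a2\<^sup>2 < a1\<^sup>2" using \<open>0 \<le> a2\<close> \<open>a2 < a1\<close> by (simp add: power_strict_mono)
    fix i j assume ij: "i < N" "j < N"
    show "(\<Sum>k<m. (p i k - p j k)\<^sup>2) = a2\<^sup>2 + (a1\<^sup>2 - a2\<^sup>2) * adj E i j - (if i = j then a2\<^sup>2 else 0)"
    proof (cases "i = j")
      case True
      moreover have "\<not> E i i" using graph ij unfolding simple_graph_def by blast
      ultimately show ?thesis by (simp add: adj_def)
    next
      case False
      have "edist m (p i) (p j) \<in> {edist m (p i) (p j) | i j. i < N \<and> j < N \<and> i \<noteq> j}"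
        using ij False by blast
      then have "edist m (p i) (p j) \<in> {a1, a2}" unfolding dists .
      moreover have "E i j \<longleftrightarrow> edist m (p i) (p j) = a1" using E ij False by blast
      ultimately have "(edist m (p i) (p j))\<^sup>2 = (if E i j then a1\<^sup>2 else a2\<^sup>2)" by auto
      then show ?thesis unfolding edist_sq using False by (simp add: adj_def)
    qed
  qed
qed

lemma sum_sq_lincomb_polarization:
  fixes x :: "nat \<Rightarrow> real"
  shows "(\<Sum>k<m. (\<Sum>i<N. x i * u i k)\<^sup>2)
    = (\<Sum>i<N. \<Sum>j<N. x i * x j
        * ((\<Sum>k<m. (u i k)\<^sup>2) + (\<Sum>k<m. (u j k)\<^sup>2) - (\<Sum>k<m. (u i k - u j k)\<^sup>2)) / 2)"
proof -
  have inner: "(\<Sum>k<m. u i k * u j k)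
      = ((\<Sum>k<m. (u i k)\<^sup>2) + (\<Sum>k<m. (u j k)\<^sup>2) - (\<Sum>k<m. (u i k - u j k)\<^sup>2)) / 2" for i j
  proof -
    have "(\<Sum>k<m. u i k * u j k) = (\<Sum>k<m. ((u i k)\<^sup>2 + (u j k)\<^sup>2 - (u i k - u j k)\<^sup>2) / 2)"
      by (intro sum.cong) (simp_all add: power2_eq_square field_simps)
    then show ?thesis by (simp add: sum.distrib sum_subtractf sum_divide_distrib[symmetric])
  qed
  have "(\<Sum>k<m. (\<Sum>i<N. x i * u i k)\<^sup>2) = (\<Sum>k<m. \<Sum>i<N. \<Sum>j<N. x i * x j * (u i k * u j k))"
    by (simp add: power2_eq_square sum_product mult_ac)
  also have "\<dots> = (\<Sum>i<N. \<Sum>k<m. \<Sum>j<N. x i * x j * (u i k * u j k))" by (rule sum.swap)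
  also have "\<dots> = (\<Sum>i<N. \<Sum>j<N. x i * x j * (\<Sum>k<m. u i k * u j k))"
    by (intro sum.cong refl) (simp add: sum.swap[of _ "{..<m}"] sum_distrib_left)
  finally show ?thesis by (simp add: inner)
qed

lemma double_sum_quadratic:
  fixes x f :: "nat \<Rightarrow> real"
  shows "(\<Sum>i<N. \<Sum>j<N. x i * x j * (f i + f j + \<alpha> + \<beta> * b i j + (if i = j then \<gamma> else 0)))
    = 2 * (\<Sum>i<N. x i * f i) * (\<Sum>i<N. x i) + \<alpha> * (\<Sum>i<N. x i)\<^sup>2
      + \<beta> * dot N x (matvec N b x) + \<gamma> * dot N x x"
proof -
  have "(\<Sum>i<N. \<Sum>j<N. x i * x j * f i) = (\<Sum>i<N. x i * f i) * (\<Sum>i<N. x i)"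
    unfolding sum_product by (intro sum.cong refl) simp
  moreover have "(\<Sum>i<N. \<Sum>j<N. x i * x j * f j) = (\<Sum>i<N. x i * f i) * (\<Sum>i<N. x i)"
    unfolding sum_product by (subst sum.swap) (intro sum.cong refl, simp)
  moreover have "(\<Sum>i<N. \<Sum>j<N. x i * x j * \<alpha>) = \<alpha> * (\<Sum>i<N. x i)\<^sup>2"
    unfolding power2_eq_square by (simp add: sum_product mult_ac sum_distrib_left)
  moreover have "(\<Sum>i<N. \<Sum>j<N. x i * x j * (\<beta> * b i j)) = \<beta> * dot N x (matvec N b x)"
    unfolding dot_def matvec_def by (simp add: sum_distrib_left mult_ac)
  moreover have "(\<Sum>i<N. \<Sum>j<N. x i * x j * (if i = j then \<gamma> else 0)) = \<gamma> * dot N x x"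
    unfolding dot_def by (simp add: sum_distrib_left if_distrib mult_ac cong: if_cong)
  ultimately show ?thesis by (simp add: distrib_left sum.distrib)
qed

text \<open>The Gram identity of a two-distance set: the squared norm of a weighted sum of the
  vectors \<open>p\<^sub>i - c\<close> only depends on the graph and on the norms \<open>|p\<^sub>i - c|\<close>.\<close>

lemma two_dist_sum_sq_lincomb:
  fixes x :: "nat \<Rightarrow> real"
  assumes sq: "\<And>i j. i < N \<Longrightarrow> j < N
      \<Longrightarrow> (\<Sum>k<m. (p i k - p j k)\<^sup>2) = A2 + (A1 - A2) * b i j - (if i = j then A2 else 0)"
  shows "(\<Sum>k<m. (\<Sum>i<N. x i * (p i k - c k))\<^sup>2)
    = (\<Sum>i<N. x i * (\<Sum>k<m. (p i k - c k)\<^sup>2)) * (\<Sum>i<N. x i) - A2 / 2 * (\<Sum>i<N. x i)\<^sup>2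
      + A2 / 2 * dot N x x - (A1 - A2) / 2 * dot N x (matvec N b x)"
proof -
  define L where "L = (\<Sum>k<m. (\<Sum>i<N. x i * (p i k - c k))\<^sup>2)"
  define f where "f i = (\<Sum>k<m. (p i k - c k)\<^sup>2) / 2" for i
  have "L = (\<Sum>i<N. \<Sum>j<N. x i * x j * ((\<Sum>k<m. (p i k - c k)\<^sup>2) + (\<Sum>k<m. (p j k - c k)\<^sup>2)
      - (\<Sum>k<m. (p i k - p j k)\<^sup>2)) / 2)"
    unfolding L_def using sum_sq_lincomb_polarization[where x = x and u = "\<lambda>i k. p i k - c k"] by simp
  also have "\<dots> = (\<Sum>i<N. \<Sum>j<N. x i * x j
      * (f i + f j + - A2 / 2 + - (A1 - A2) / 2 * b i j + (if i = j then A2 / 2 else 0)))"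
  proof (intro sum.cong refl)
    fix i j assume "i \<in> {..<N}" "j \<in> {..<N}"
    then have ij: "i < N" "j < N" by auto
    show "x i * x j * ((\<Sum>k<m. (p i k - c k)\<^sup>2) + (\<Sum>k<m. (p j k - c k)\<^sup>2)
        - (\<Sum>k<m. (p i k - p j k)\<^sup>2)) / 2
      = x i * x j * (f i + f j + - A2 / 2 + - (A1 - A2) / 2 * b i j + (if i = j then A2 / 2 else 0))"
      unfolding f_def sq[OF ij] by (simp add: field_simps)
  qed
  also have "\<dots> = 2 * (\<Sum>i<N. x i * f i) * (\<Sum>i<N. x i) + - A2 / 2 * (\<Sum>i<N. x i)\<^sup>2
      + - (A1 - A2) / 2 * dot N x (matvec N b x) + A2 / 2 * dot N x x"
    by (rule double_sum_quadratic)
  finally have L: "L = 2 * (\<Sum>i<N. x i * f i) * (\<Sum>i<N. x i) + - A2 / 2 * (\<Sum>i<N. x i)\<^sup>2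
      + - (A1 - A2) / 2 * dot N x (matvec N b x) + A2 / 2 * dot N x x" .
  have "(\<Sum>i<N. x i * (\<Sum>k<m. (p i k - c k)\<^sup>2)) = 2 * (\<Sum>i<N. x i * f i)"
    unfolding f_def by (simp add: sum_distrib_left sum_distrib_right sum_divide_distrib[symmetric] mult_ac)
  then show ?thesis unfolding L_def[symmetric] L by (simp add: field_simps)
qed

lemma spherical_two_dist_sum_sq_lincomb:
  fixes x :: "nat \<Rightarrow> real"
  assumes sq: "\<And>i j. i < N \<Longrightarrow> j < N
      \<Longrightarrow> (\<Sum>k<m. (p i k - p j k)\<^sup>2) = A2 + (A1 - A2) * b i j - (if i = j then A2 else 0)"
    and "A2 < A1" and sph: "\<And>i. i < N \<Longrightarrow> (\<Sum>k<m. (p i k - c k)\<^sup>2) = \<rho>"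
  shows "(\<Sum>k<m. (\<Sum>i<N. x i * (p i k - c k))\<^sup>2)
    = (A1 - A2) / 2 * gram_form N b (A2 / (A1 - A2)) ((2 * \<rho> - A2) / (A1 - A2)) x"
proof -
  have "(\<Sum>k<m. (\<Sum>i<N. x i * (p i k - c k))\<^sup>2)
    = (\<Sum>i<N. x i * (\<Sum>k<m. (p i k - c k)\<^sup>2)) * (\<Sum>i<N. x i) - A2 / 2 * (\<Sum>i<N. x i)\<^sup>2
      + A2 / 2 * dot N x x - (A1 - A2) / 2 * dot N x (matvec N b x)"
    by (rule two_dist_sum_sq_lincomb[OF sq])
  also have "(\<Sum>i<N. x i * (\<Sum>k<m. (p i k - c k)\<^sup>2)) = \<rho> * (\<Sum>i<N. x i)"
    using sph by (simp add: sum_distrib_left mult.commute)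
  also have "\<rho> * (\<Sum>i<N. x i) * (\<Sum>i<N. x i) - A2 / 2 * (\<Sum>i<N. x i)\<^sup>2
      + A2 / 2 * dot N x x - (A1 - A2) / 2 * dot N x (matvec N b x)
    = (A1 - A2) / 2 * gram_form N b (A2 / (A1 - A2)) ((2 * \<rho> - A2) / (A1 - A2)) x"
  proof -
    have cancel: "u / 2 * (v / u) = v / 2" if "u \<noteq> 0" for u v :: real using that by simp
    have "A1 - A2 \<noteq> 0" using \<open>A2 < A1\<close> by simp
    then have "(A1 - A2) / 2 * (A2 / (A1 - A2)) = A2 / 2"
      "(A1 - A2) / 2 * ((2 * \<rho> - A2) / (A1 - A2)) = (2 * \<rho> - A2) / 2"
      by (rule cancel)+
    then show ?thesis unfolding gram_form_def
      by (simp only: right_diff_distrib distrib_left mult.assoc[symmetric])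
        (simp add: field_simps power2_eq_square)
  qed
  finally show ?thesis .
qed

lemma sum_zero_two_dist_sum_sq_lincomb:
  fixes x :: "nat \<Rightarrow> real"
  assumes sq: "\<And>i j. i < N \<Longrightarrow> j < N
      \<Longrightarrow> (\<Sum>k<m. (p i k - p j k)\<^sup>2) = A2 + (A1 - A2) * b i j - (if i = j then A2 else 0)"
    and "A2 < A1" and "(\<Sum>i<N. x i) = 0"
  shows "(\<Sum>k<m. (\<Sum>i<N. x i * p i k)\<^sup>2)
    = (A1 - A2) / 2 * (A2 / (A1 - A2) * dot N x x - dot N x (matvec N b x))"
proof -
  have "(\<Sum>k<m. (\<Sum>i<N. x i * p i k)\<^sup>2) = (\<Sum>k<m. (\<Sum>i<N. x i * (p i k - 0))\<^sup>2)" by simp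
  also have "\<dots> = (\<Sum>i<N. x i * (\<Sum>k<m. (p i k - 0)\<^sup>2)) * (\<Sum>i<N. x i) - A2 / 2 * (\<Sum>i<N. x i)\<^sup>2
      + A2 / 2 * dot N x x - (A1 - A2) / 2 * dot N x (matvec N b x)"
    by (rule two_dist_sum_sq_lincomb[OF sq])
  also have "\<dots> = (A1 - A2) / 2 * (A2 / (A1 - A2) * dot N x x - dot N x (matvec N b x))"
  proof -
    have cancel: "u / 2 * (v / u) = v / 2" if "u \<noteq> 0" for u v :: real using that by simp
    have "A1 - A2 \<noteq> 0" using \<open>A2 < A1\<close> by simp
    then have "(A1 - A2) / 2 * (A2 / (A1 - A2)) = A2 / 2" by (rule cancel)
    then show ?thesis using \<open>(\<Sum>i<N. x i) = 0\<close>
      by (simp only: right_diff_distrib mult.assoc[symmetric]) (simp add: field_simps)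
  qed
  finally show ?thesis .
qed

lemma exists_affine_dependency:
  fixes p :: "nat \<Rightarrow> nat \<Rightarrow> real"
  assumes "m + 1 < N"
  obtains z where "\<exists>i<N. z i \<noteq> 0" "(\<Sum>i<N. z i) = 0" "\<And>k. k < m \<Longrightarrow> (\<Sum>i<N. z i * (p i k - c k)) = 0"
proof -
  define C where "C r i = (if r = m then 1 else p i r - c r)" for r i
  obtain z where z: "\<exists>i\<in>{..<N}. z i \<noteq> 0" "\<forall>r\<in>{..m}. (\<Sum>i<N. C r i * z i) = 0"
    using exists_nonzero_solution[of "{..m}" "{..<N}" C] assms by auto
  show ?thesis
  proof (rule that)
    show "\<exists>i<N. z i \<noteq> 0" using z(1) by auto
    show "(\<Sum>i<N. z i) = 0" using z(2)[rule_format, of m] by (simp add: C_def)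
    show "(\<Sum>i<N. z i * (p i k - c k)) = 0" if "k < m" for k
      using z(2)[rule_format, of k] that by (simp add: C_def mult.commute)
  qed
qed

lemma spherical_rep_gram_spectrum:
  assumes eigenbasis: "eigenbasis N (adj E) V W ev"
    and count: "\<And>\<mu>. card {k. k < N \<and> ev k = \<mu>} = card {i. i < N \<and> lam i = \<mu>}"
    and antimono: "\<And>i j. i \<le> j \<Longrightarrow> j < N \<Longrightarrow> lam j \<le> lam i"
    and graph: "simple_graph N E" and "spherically_representable m N E" and "m + 2 \<le> N"
  obtains \<theta> s p c \<rho> \<kappa> where "gram_spectrum N (adj E) V W ev lam \<theta> s"
    and "two_dist_rep m N E p" and "\<And>i. i < N \<Longrightarrow> (\<Sum>k<m. (p i k - c k)\<^sup>2) = \<rho>"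
    and "0 < \<kappa>" and "\<And>x. (\<Sum>k<m. (\<Sum>i<N. x i * (p i k - c k))\<^sup>2) = \<kappa> * gram_form N (adj E) \<theta> s x"
proof -
  obtain p c r where rep: "two_dist_rep m N E p" and "\<forall>i<N. edist m (p i) c = r"
    using assms(5) unfolding spherically_representable_def by blast
  then have sph: "\<And>i. i < N \<Longrightarrow> (\<Sum>k<m. (p i k - c k)\<^sup>2) = r\<^sup>2" by (simp flip: edist_sq)
  obtain A2 A1 where "A2 < A1" and sq: "\<And>i j. i < N \<Longrightarrow> j < N
      \<Longrightarrow> (\<Sum>k<m. (p i k - p j k)\<^sup>2) = A2 + (A1 - A2) * adj E i j - (if i = j then A2 else 0)"
    using two_dist_rep_sq_dist[OF rep graph] by blast
  define \<theta> where "\<theta> = A2 / (A1 - A2)"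
  define s where "s = (2 * r\<^sup>2 - A2) / (A1 - A2)"
  define \<kappa> where "\<kappa> = (A1 - A2) / 2"
  have "0 < \<kappa>" unfolding \<kappa>_def using \<open>A2 < A1\<close> by simp
  have gram: "(\<Sum>k<m. (\<Sum>i<N. x i * (p i k - c k))\<^sup>2) = \<kappa> * gram_form N (adj E) \<theta> s x" for x
    unfolding \<theta>_def s_def \<kappa>_def by (rule spherical_two_dist_sum_sq_lincomb[OF sq \<open>A2 < A1\<close> sph])
  have "gram_spectrum N (adj E) V W ev lam \<theta> s"
  proof (rule gram_spectrum.intro[OF eigenbasis], unfold_locales)
    show "card {k. k < N \<and> ev k = \<mu>} = card {i. i < N \<and> lam i = \<mu>}" for \<mu> by (rule count)
    show "lam j \<le> lam i" if "i \<le> j" "j < N" for i j using antimono that .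
    show "0 \<le> adj E i j" for i j by (simp add: adj_def)
    show "2 \<le> N" using \<open>m + 2 \<le> N\<close> by simp
    show "0 \<le> gram_form N (adj E) \<theta> s x" for x
      using gram[of x] \<open>0 < \<kappa>\<close> sum_nonneg[of "{..<m}" "\<lambda>k. (\<Sum>i<N. x i * (p i k - c k))\<^sup>2"]
      by (simp add: zero_le_mult_iff)
    have "m + 1 < N" using \<open>m + 2 \<le> N\<close> by simp
    then obtain z where "\<exists>i<N. z i \<noteq> 0" "(\<Sum>i<N. z i) = 0"
      "\<And>k. k < m \<Longrightarrow> (\<Sum>i<N. z i * (p i k - c k)) = 0"
      using exists_affine_dependency[where p = p and c = c] by blast
    then show "\<exists>z. (\<exists>i<N. z i \<noteq> 0) \<and> (\<Sum>i<N. z i) = 0 \<and> gram_form N (adj E) \<theta> s z = 0"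
      using gram[of z] \<open>0 < \<kappa>\<close> by auto
  qed
  then show ?thesis using that rep sph \<open>0 < \<kappa>\<close> gram by blast
qed

context gram_spectrum
begin

lemma second_mult_ge_if_representable:
  assumes adj: "a = adj E" and graph: "simple_graph N E" and "representable n N E" and "n + 1 < N"
  shows "N - 1 - n \<le> second_mult"
proof -
  obtain q where rep: "two_dist_rep n N E q" using assms(3) unfolding representable_def by blast
  obtain B2 B1 where "B2 < B1" and sq: "\<And>i j. i < N \<Longrightarrow> j < N
      \<Longrightarrow> (\<Sum>k<n. (q i k - q j k)\<^sup>2) = B2 + (B1 - B2) * a i j - (if i = j then B2 else 0)"
    using two_dist_rep_sq_dist[OF rep graph, folded adj] by blast
  define \<theta>' where "\<theta>' = B2 / (B1 - B2)"
  have gram: "(\<Sum>k<n. (\<Sum>i<N. x i * q i k)\<^sup>2)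
      = (B1 - B2) / 2 * (\<theta>' * dot N x x - dot N x (matvec N a x))" if "(\<Sum>i<N. x i) = 0" for x
    unfolding \<theta>'_def using sq \<open>B2 < B1\<close> that by (rule sum_zero_two_dist_sum_sq_lincomb)
  have max: "dot N x (matvec N a x) \<le> \<theta>' * dot N x x" if "(\<Sum>i<N. x i) = 0" for x
  proof -
    have "0 \<le> (B1 - B2) / 2 * (\<theta>' * dot N x x - dot N x (matvec N a x))"
      unfolding gram[OF that, symmetric] by (intro sum_nonneg) simp
    then show ?thesis using \<open>B2 < B1\<close> by (simp add: zero_le_mult_iff)
  qed
  have eq: "dot N x (matvec N a x) = \<theta>' * dot N x x"
    if "(\<Sum>i<N. x i) = 0" "\<And>k. k < n \<Longrightarrow> (\<Sum>i<N. q i k * x i) = 0" for x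
    using gram[OF that(1)] that(2) \<open>B2 < B1\<close> by (simp add: mult.commute)
  obtain x0 where "\<exists>i<N. x0 i \<noteq> 0" "(\<Sum>i<N. x0 i) = 0" "\<And>k. k < n \<Longrightarrow> (\<Sum>i<N. x0 i * (q i k - 0)) = 0"
    using exists_affine_dependency[where p = q and c = "\<lambda>_. 0", OF \<open>n + 1 < N\<close>] by blast
  then have "\<theta>' = \<theta>"
    using max eq[of x0] by (intro sum_zero_rayleigh_max_unique[of \<theta>' x0]) (auto simp: mult.commute)
  show ?thesis
  proof (rule second_mult_lower_bound[where L = "\<lambda>k i. q i k"])
    fix x i
    assume sum_x: "(\<Sum>i<N. x i) = 0" and "\<And>k. k < n \<Longrightarrow> (\<Sum>i<N. q i k * x i) = 0" and "i < N"
    then have "gram_form N a \<theta> s x = 0"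
      using eq[of x] \<open>\<theta>' = \<theta>\<close> unfolding gram_form_def by simp
    then show "matvec N a x i = \<theta> * x i" using gram_form_eq_0_iff[OF sum_x] \<open>i < N\<close> by blast
  qed
qed

lemma spherically_representable_if_second_mult_ge:
  assumes rep: "two_dist_rep m N E p" and sph: "\<And>i. i < N \<Longrightarrow> (\<Sum>k<m. (p i k - c k)\<^sup>2) = \<rho>"
    and gram: "\<And>x. (\<Sum>k<m. (\<Sum>i<N. x i * (p i k - c k))\<^sup>2) = \<kappa> * gram_form N a \<theta> s x"
    and "0 < \<kappa>" and "N - 1 - n \<le> second_mult"
  shows "spherically_representable n N E"
proof -
  obtain T X where basis: "zero_sum_eigenbasis T X" and card_T: "card T = second_mult"
    by (rule zero_sum_eigenbasis_exists)
  then have fin: "finite T"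
    and sum_X: "\<And>t. t \<in> T \<Longrightarrow> (\<Sum>i<N. X t i) = 0"
    and eig_X: "\<And>t i. t \<in> T \<Longrightarrow> i < N \<Longrightarrow> matvec N a (X t) i = \<theta> * X t i"
    and coord_X: "\<And>t k. t \<in> T \<Longrightarrow> k \<in> T \<Longrightarrow> coord (X t) k = (if k = t then 1 else 0)"
    unfolding zero_sum_eigenbasis_def by blast+
  have "(\<Sum>i<N. X t i * p i k) = 0" if t: "t \<in> T" and k: "k < m" for t k
  proof -
    have "gram_form N a \<theta> s (X t) = 0" using gram_form_eq_0_iff[OF sum_X] eig_X t by blast
    then have "(\<Sum>k<m. (\<Sum>i<N. X t i * (p i k - c k))\<^sup>2) = 0" using gram by simp
    then have "(\<Sum>i<N. X t i * (p i k - c k)) = 0" using k by (simp add: sum_nonneg_eq_0_iff)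
    then show ?thesis using sum_X[OF t] by (simp add: right_diff_distrib sum_subtractf sum_distrib_right[symmetric])
  qed
  moreover have "N \<le> card T + n + 1" using card_T \<open>N - 1 - n \<le> second_mult\<close> by linarith
  ultimately show ?thesis
  proof (intro spherically_representable_if_affine_dependencies[OF rep two_le_N sph fin _ sum_X])
    show "\<forall>t\<in>T. \<beta> t = 0" if "\<forall>i<N. (\<Sum>t\<in>T. \<beta> t * X t i) = 0" for \<beta>
      using coeffs_eq_0_if_coord_delta[OF fin coord_X] that by blast
  qed
qed

end

theorem proposition1p2:
  fixes d n :: nat and E :: "nat \<Rightarrow> nat \<Rightarrow> bool" and lam :: "nat \<Rightarrow> real"
  assumes "0 < n" and "n \<le> d"
    and "simple_graph (d + 2) E"
    and "char_poly (adj_matrix (d + 2) E) = (\<Prod>i<d + 2. [:- lam i, 1:])"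
    and "\<forall>i j. i \<le> j \<longrightarrow> j < d + 2 \<longrightarrow> lam j \<le> lam i"
    and "spherically_representable d (d + 2) E"
  shows "(representable n (d + 2) E \<longleftrightarrow> card {i. 1 \<le> i \<and> i < d + 2 \<and> lam i = lam 1} \<ge> d + 1 - n)
       \<and> (spherically_representable n (d + 2) E \<longleftrightarrow> card {i. 1 \<le> i \<and> i < d + 2 \<and> lam i = lam 1} \<ge> d + 1 - n)"
proof -
  define N where "N = d + 2"
  have graph: "simple_graph N E" using assms(3) unfolding N_def .
  have antimono: "\<And>i j. i \<le> j \<Longrightarrow> j < N \<Longrightarrow> lam j \<le> lam i" using assms(5) unfolding N_def by blast
  obtain V W ev where eigenbasis: "eigenbasis N (adj E) V W ev"
    and count: "\<And>\<mu>. card {k. k < N \<and> ev k = \<mu>} = card {i. i < N \<and> lam i = \<mu>}"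
    using adj_matrix_eigenbasis[OF graph] assms(4) unfolding N_def by blast
  have "d + 2 \<le> N" unfolding N_def by simp
  then obtain \<theta> s p c \<rho> \<kappa> where "gram_spectrum N (adj E) V W ev lam \<theta> s"
    and rep: "two_dist_rep d N E p" and sph: "\<And>i. i < N \<Longrightarrow> (\<Sum>k<d. (p i k - c k)\<^sup>2) = \<rho>"
    and "0 < \<kappa>" and gram: "\<And>x. (\<Sum>k<d. (\<Sum>i<N. x i * (p i k - c k))\<^sup>2) = \<kappa> * gram_form N (adj E) \<theta> s x"
    using spherical_rep_gram_spectrum[OF eigenbasis count antimono graph assms(6)[folded N_def]] by blast
  interpret gram_spectrum N "adj E" V W ev lam \<theta> s by fact
  have "n + 1 < N" using assms(2) unfolding N_def by simp
  have "representable n N E \<Longrightarrow> N - 1 - n \<le> second_mult"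
    using second_mult_ge_if_representable[OF refl graph _ \<open>n + 1 < N\<close>] .
  moreover have "N - 1 - n \<le> second_mult \<Longrightarrow> spherically_representable n N E"
    by (rule spherically_representable_if_second_mult_ge[OF rep sph gram \<open>0 < \<kappa>\<close>])
  moreover have "spherically_representable n N E \<Longrightarrow> representable n N E"
    unfolding spherically_representable_def representable_def by blast
  moreover have "second_mult = card {i. 1 \<le> i \<and> i < N \<and> lam i = lam 1}" by (rule second_mult_def)
  ultimately show ?thesis unfolding N_def by auto
qed

end
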